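(* Let $b$ be a prime, $m$ a positive integer, $N=b^m$, $(\gamma_j)_{j\ge1}$ a non-increasing sequence with $0<\gamma_j\le1$, and $0\le w_1\le w_2\le\cdots$ integers. Let $\mathbf{z}=(b^{w_1}z_1,\dots,b^{w_s}z_s)$ be constructed by the reduced CBC algorithm: $z_1=1$, and for $d=1,\dots,s-1$, given $z_1,\dots,z_d$, $z_{d+1}\in\mathcal{Z}_{N,w_{d+1}}$ is chosen to minimize $z\mapsto R^{d+1}_{N,\boldsymbol\gamma}(b^{w_1}z_1,\dots,b^{w_d}z_d,b^{w_{d+1}}z)$ over $z\in\mathcal{Z}_{N,w_{d+1}}$. Then the lattice point set $P_N(\mathbf{z})$ satisfies $$D^*_{N,\boldsymbol\gamma}(\mathbf{z})\le\sum_{\mathfrak{u}\subseteq[s]}\gamma_{\mathfrak{u}}\left(1-\left(1-\frac1N\right)^{|\mathfrak{u}|}\right)+\frac1{2N}\prod_{j=1}^s\left(\beta_j+\left(1+2b^{\min\{w_j,m\}}\right)\gamma_jS_N\right),$$ where $\beta_j=1+\gamma_j$.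
   Context: $[s]=\{1,\dots,s\}$; product weights $\gamma_{\mathfrak{u}}=\prod_{j\in\mathfrak{u}}\gamma_j$, $\gamma_\emptyset=1$. $\mathcal{Z}_{N,w}=\{z\in\{1,\dots,b^{m-w}-1\}:\gcd(z,b^m)=1\}$ if $w<m$, and $\{1\}$ if $w\ge m$. $S_N=\sum_{-N/2<h\le N/2,\,h\ne0}\frac{1}{|h|}$. For $\mathbf{y}\in\mathbb{Z}^d$, $R^d_{N,\boldsymbol\gamma}(\mathbf{y})=\frac1N\sum_{k=0}^{N-1}\prod_{j=1}^d\big(\beta_j+\gamma_j\sum_{-N/2<h\le N/2,h\ne0}\frac{e^{2\pi i hky_j/N}}{|h|}\big)-\prod_{j=1}^d\beta_j$. Lattice point set $P_N(\mathbf{z})=\{\{k\mathbf{z}/N\}:k=0,\dots,N-1\}$ (componentwise fractional parts). $\mathrm{discr}(\mathbf{x},P_N)=\frac1N\#\{\mathbf{p}\in P_N:\mathbf{p}\in[\mathbf{0},\mathbf{x})\}-\prod_j x_j$; $D^*_{N,\boldsymbol\gamma}(\mathbf{z})=\sup_{\mathbf{x}\in(0,1]^s}\max_{\emptyset\ne\mathfrak{u}\subseteq[s]}\gamma_{\mathfrak{u}}|\mathrm{discr}((\mathbf{x}_{\mathfrak{u}},\mathbf{1}),P_N(\mathbf{z}))|$, where $(\mathbf{x}_{\mathfrak{u}},\mathbf{1})$ has $j$-th coordinate $x_j$ for $j\in\mathfrak{u}$ and $1$ otherwise. *)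

theory Defs
  imports "HOL-Analysis.Analysis"
begin

definition freqs :: "nat \<Rightarrow> int set" where
  "freqs N = {h::int. - (real N / 2) < real_of_int h \<and> real_of_int h \<le> real N / 2 \<and> h \<noteq> 0}"

definition S_N :: "nat \<Rightarrow> real" where
  "S_N N = (\<Sum>h\<in>freqs N. 1 / real_of_int \<bar>h\<bar>)"

definition Zset :: "nat \<Rightarrow> nat \<Rightarrow> nat \<Rightarrow> nat set" where
  "Zset b m w = (if w < m then {z \<in> {1 .. b ^ (m - w) - 1}. gcd z (b ^ m) = 1} else {1})"

definition R_crit :: "nat \<Rightarrow> nat \<Rightarrow> (nat \<Rightarrow> real) \<Rightarrow> (nat \<Rightarrow> real) \<Rightarrow> (nat \<Rightarrow> int) \<Rightarrow> complex" where
  "R_crit d N \<beta> \<gamma> y =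
     (1 / of_nat N) * (\<Sum>k<N. \<Prod>j\<in>{1..d}.
        (complex_of_real (\<beta> j) + complex_of_real (\<gamma> j) *
          (\<Sum>h\<in>freqs N. exp (2 * pi * \<i> * of_int h * of_nat k * of_int (y j) / of_nat N)
                          / of_int \<bar>h\<bar>)))
     - (\<Prod>j\<in>{1..d}. complex_of_real (\<beta> j))"

text \<open>Local discrepancy of the lattice point set P_N(y) (points counted with
  multiplicity over k = 0..N-1) at the box anchored at (x_u, 1).\<close>
definition discr_u :: "nat \<Rightarrow> (nat \<Rightarrow> int) \<Rightarrow> nat set \<Rightarrow> (nat \<Rightarrow> real) \<Rightarrow> real" where
  "discr_u N y u x =
     real (card {k \<in> {0..<N}. \<forall>j\<in>u. frac (real k * real_of_int (y j) / real N) < x j}) / real N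
     - (\<Prod>j\<in>u. x j)"

definition weighted_star_discrepancy ::
  "nat \<Rightarrow> nat \<Rightarrow> (nat \<Rightarrow> real) \<Rightarrow> (nat \<Rightarrow> int) \<Rightarrow> real" where
  "weighted_star_discrepancy s N \<gamma> y =
     (SUP p \<in> {(x, u). (\<forall>j\<in>{1..s}. 0 < x j \<and> x j \<le> 1) \<and> u \<subseteq> {1..s} \<and> u \<noteq> {}}.
        (\<Prod>j\<in>snd p. \<gamma> j) * \<bar>discr_u N y (snd p) (fst p)\<bar>)"

end

theory Submission
  imports Defs
begin

text \<open>With \<open>e(x) = exp (2 \<pi> i x / N)\<close> and the weights \<open>\<rho>_j(0) = \<beta>_j\<close>, \<open>\<rho>_j(h) = \<gamma>_j / |h|\<close>
  for \<open>h \<noteq> 0\<close>, orthogonality of characters turns \<open>R^d(y) + \<Prod> \<beta>_j\<close> into the sum of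
  \<open>\<Prod>_j \<rho>_j(h_j)\<close> over the frequency vectors \<open>h\<close> with \<open>N | h \<cdot> y\<close>. Passing from \<open>d\<close> to \<open>d + 1\<close>
  multiplies this sum by \<open>\<beta>_(d+1)\<close> and adds \<open>\<gamma>_(d+1)\<close> times a sum depending on \<open>z_(d+1)\<close>.
  The minimiser does at least as well as the average over \<open>Z_(N,w)\<close>, and counting the
  solutions of linear congruences bounds that average by \<open>2 b^min(w,m) S_N / N\<close> times the total
  mass \<open>\<Prod>_j (\<beta>_j + \<gamma>_j S_N)\<close>; induction on \<open>d\<close> gives
  \<open>R^s \<le> \<Prod>_j (\<beta>_j + (1 + 2 b^min(w_j,m)) \<gamma>_j S_N) / N\<close>.

  For the discrepancy, round the box \<open>[0, x)\<close> up to the grid box \<open>[0, a/N)\<close>. The indicator of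
  \<open>{0, \<dots>, a - 1}\<close> modulo \<open>N\<close> has discrete Fourier coefficients of modulus at most \<open>1 / (2|h|)\<close>
  for \<open>h \<noteq> 0\<close> (Jordan's inequality), so the weighted counting error of the grid box is dominated
  term by term by half of the dual-lattice sum, i.e. by \<open>R^s / 2\<close>; rounding costs at most
  \<open>1 - (1 - 1/N)^|u|\<close> in volume.\<close>

section \<open>Additive characters modulo \<open>N\<close>\<close>

definition addchar :: "nat \<Rightarrow> int \<Rightarrow> complex" where
  "addchar N x = exp (2 * pi * \<i> * of_int x / of_nat N)"

lemma addchar_add: "addchar N (x + y) = addchar N x * addchar N y"
  unfolding addchar_def by (simp add: distrib_left add_divide_distrib exp_add)

lemma addchar_0 [simp]: "addchar N 0 = 1"
  unfolding addchar_def by simp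

lemma norm_addchar [simp]: "norm (addchar N x) = 1"
  unfolding addchar_def by (simp add: norm_exp_eq_Re)

lemma addchar_int_mult: "addchar N (int k * x) = addchar N x ^ k"
proof (induction k)
  case (Suc k)
  have "int (Suc k) * x = x + int k * x" by (simp add: algebra_simps)
  then show ?case using Suc by (simp add: addchar_add)
qed simp

lemma addchar_eq_1_iff:
  assumes "N > 0"
  shows "addchar N x = 1 \<longleftrightarrow> int N dvd x"
proof
  assume "addchar N x = 1"
  then obtain n :: int where "Im (2 * pi * \<i> * of_int x / of_nat N) = of_int (2 * n) * pi"
    unfolding addchar_def exp_eq_1 by auto
  then have "real_of_int x = real N * real_of_int n"
    using assms pi_gt_zero by (simp add: field_simps)
  then have "x = int N * n" by (metis of_int_eq_iff of_int_mult of_int_of_nat_eq)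
  then show "int N dvd x" by simp
next
  assume "int N dvd x"
  then obtain c where "x = int N * c" by (auto elim!: dvdE)
  moreover have "2 * pi * \<i> * of_int (int N * c) / of_nat N = \<i> * (of_int c * (of_real pi * 2))"
    using assms by (simp add: field_simps)
  ultimately show "addchar N x = 1" unfolding addchar_def by simp
qed

lemma addchar_cong:
  assumes "N > 0" "x mod int N = y mod int N"
  shows "addchar N x = addchar N y"
proof -
  have "int N dvd x - y" using assms(2) by (simp add: mod_eq_dvd_iff)
  then have "addchar N (x - y) = 1" using addchar_eq_1_iff[OF assms(1)] by simp
  then show ?thesis using addchar_add[of N y "x - y"] by simp
qed

lemma sum_addchar_residues:
  assumes "N > 0"
  shows "(\<Sum>k<N. addchar N (int k * t)) = (if int N dvd t then of_nat N else 0)"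
proof (cases "int N dvd t")
  case True
  then have "addchar N (int k * t) = 1" for k by (simp add: addchar_eq_1_iff[OF assms])
  then show ?thesis using True by simp
next
  case False
  let ?q = "addchar N t"
  have "?q \<noteq> 1" using False addchar_eq_1_iff[OF assms] by simp
  moreover have "?q ^ N = 1"
    using addchar_int_mult[of N N t] addchar_eq_1_iff[OF assms, of "int N * t"] by simp
  ultimately have "(\<Sum>k<N. ?q ^ k) = 0" by (simp add: geometric_sum)
  then show ?thesis using False by (simp add: addchar_int_mult)
qed

section \<open>The frequency box\<close>

definition freqs0 :: "nat \<Rightarrow> int set" where
  "freqs0 N = insert 0 (freqs N)"

lemma finite_freqs [simp]: "finite (freqs N)"
proof (rule finite_subset)
  show "freqs N \<subseteq> {- int N .. int N}" unfolding freqs_def by auto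
qed simp

lemma zero_notin_freqs [simp]: "0 \<notin> freqs N"
  unfolding freqs_def by simp

lemma S_N_nonneg: "S_N N \<ge> 0"
  unfolding S_N_def by (intro sum_nonneg) simp

lemma mem_freqs0_iff:
  assumes "N > 0"
  shows "h \<in> freqs0 N \<longleftrightarrow> - int N < 2 * h \<and> 2 * h \<le> int N"
proof -
  have "- (real N / 2) < real_of_int h \<longleftrightarrow> - int N < 2 * h"
       "real_of_int h \<le> real N / 2 \<longleftrightarrow> 2 * h \<le> int N" by linarith+
  then show ?thesis unfolding freqs0_def freqs_def using assms by auto
qed

lemma bij_betw_freqs0_residues:
  assumes "N > 0"
  shows "bij_betw (\<lambda>h. nat (h mod int N)) (freqs0 N) {..<N}"
proof (rule bij_betw_imageI)
  show "inj_on (\<lambda>h. nat (h mod int N)) (freqs0 N)"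
  proof
    fix h1 h2 assume h: "h1 \<in> freqs0 N" "h2 \<in> freqs0 N" "nat (h1 mod int N) = nat (h2 mod int N)"
    then have "int (nat (h1 mod int N)) = int (nat (h2 mod int N))" by simp
    then have "h1 mod int N = h2 mod int N" using assms by simp
    then have "int N dvd h1 - h2" by (simp add: mod_eq_dvd_iff)
    then obtain q where q: "h1 - h2 = int N * q" by (auto elim!: dvdE)
    have "- int N < 2 * h1" "2 * h1 \<le> int N" "- int N < 2 * h2" "2 * h2 \<le> int N"
      using h(1,2) mem_freqs0_iff[OF assms] by auto
    moreover have "\<bar>int N * q\<bar> \<ge> int N" if "q \<noteq> 0" using assms that by (simp add: abs_mult)
    ultimately have "q = 0" using q by (cases "q = 0") linarith+
    then show "h1 = h2" using q by simp
  qed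
  show "(\<lambda>h. nat (h mod int N)) ` freqs0 N = {..<N}"
  proof
    show "(\<lambda>h. nat (h mod int N)) ` freqs0 N \<subseteq> {..<N}" using assms by (auto simp: nat_less_iff)
    show "{..<N} \<subseteq> (\<lambda>h. nat (h mod int N)) ` freqs0 N"
    proof
      fix k assume k: "k \<in> {..<N}"
      define h where "h = (if 2 * int k \<le> int N then int k else int k - int N)"
      have "h \<in> freqs0 N" unfolding mem_freqs0_iff[OF assms] h_def using k by auto
      moreover have "h mod int N = int k mod int N"
        unfolding h_def by (auto simp: mod_diff_right_eq[symmetric])
      then have "nat (h mod int N) = k" using k by simp
      ultimately show "k \<in> (\<lambda>h. nat (h mod int N)) ` freqs0 N" by force
    qed
  qed
qed

lemma sum_addchar_freqs0:
  assumes "N > 0"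
  shows "(\<Sum>h\<in>freqs0 N. addchar N (h * x)) = (if int N dvd x then of_nat N else 0)"
proof -
  have "(\<Sum>h\<in>freqs0 N. addchar N (h * x)) = (\<Sum>h\<in>freqs0 N. addchar N (int (nat (h mod int N)) * x))"
  proof (intro sum.cong refl addchar_cong[OF assms])
    fix h
    have "int (nat (h mod int N)) = h mod int N" using assms by simp
    then show "(h * x) mod int N = (int (nat (h mod int N)) * x) mod int N"
      by (simp add: mod_mult_left_eq)
  qed
  also have "\<dots> = (\<Sum>k<N. addchar N (int k * x))"
    by (rule sum.reindex_bij_betw[OF bij_betw_freqs0_residues[OF assms]])
  finally show ?thesis using sum_addchar_residues[OF assms] by simp
qed

section \<open>Sums over the dual lattice\<close>

text \<open>\<open>dual_sum N \<phi> y d t\<close> is the sum of \<open>\<phi> 1 h_1 * \<dots> * \<phi> d h_d\<close> over all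
  \<open>h_1, \<dots>, h_d \<in> freqs0 N\<close> with \<open>N | t + h_1 y_1 + \<dots> + h_d y_d\<close>, unrolled one coordinate
  at a time.\<close>

fun dual_sum :: "nat \<Rightarrow> (nat \<Rightarrow> int \<Rightarrow> 'a::comm_ring_1) \<Rightarrow> (nat \<Rightarrow> int) \<Rightarrow> nat \<Rightarrow> int \<Rightarrow> 'a" where
  "dual_sum N \<phi> y 0 t = (if int N dvd t then 1 else 0)"
| "dual_sum N \<phi> y (Suc d) t =
     (\<Sum>h\<in>freqs0 N. \<phi> (Suc d) h * dual_sum N \<phi> y d (t + h * y (Suc d)))"

lemma dual_sum_Suc_split:
  "dual_sum N \<phi> y (Suc d) t = \<phi> (Suc d) 0 * dual_sum N \<phi> y d t
     + (\<Sum>h\<in>freqs N. \<phi> (Suc d) h * dual_sum N \<phi> y d (t + h * y (Suc d)))"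
  unfolding dual_sum.simps(2) freqs0_def by (subst sum.insert) auto

lemma dual_sum_Fourier:
  assumes "N > 0"
  shows "(1 / of_nat N) * (\<Sum>k<N. (\<Prod>j\<in>{1..d}. \<Sum>h\<in>freqs0 N. \<phi> j h * addchar N (int k * h * y j))
            * addchar N (int k * t))
         = dual_sum N \<phi> y d t"
proof (induction d arbitrary: t)
  case 0
  show ?case using sum_addchar_residues[OF assms, of t] assms by simp
next
  case (Suc d)
  let ?P = "\<lambda>k. \<Prod>j\<in>{1..d}. \<Sum>h\<in>freqs0 N. \<phi> j h * addchar N (int k * h * y j)"
  have "(\<Sum>k<N. (\<Prod>j\<in>{1..Suc d}. \<Sum>h\<in>freqs0 N. \<phi> j h * addchar N (int k * h * y j)) * addchar N (int k * t))
    = (\<Sum>k<N. \<Sum>h\<in>freqs0 N. \<phi> (Suc d) h * (?P k * addchar N (int k * (t + h * y (Suc d)))))"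
    by (intro sum.cong refl)
       (simp add: prod.cl_ivl_Suc sum_distrib_left sum_distrib_right addchar_add distrib_left mult_ac)
  also have "\<dots> = (\<Sum>h\<in>freqs0 N. \<phi> (Suc d) h * (\<Sum>k<N. ?P k * addchar N (int k * (t + h * y (Suc d)))))"
    by (subst sum.swap) (simp add: sum_distrib_left)
  finally show ?case
    by (simp add: sum_distrib_left Suc.IH[symmetric] mult_ac)
qed

lemma dual_sum_of_real:
  "dual_sum N (\<lambda>j h. of_real (\<rho> j h)) y d t = (of_real (dual_sum N \<rho> y d t) :: 'a::{real_algebra_1,comm_ring_1})"
  by (induction d arbitrary: t) auto

lemma dual_sum_nonneg:
  assumes "\<And>j h. 1 \<le> j \<Longrightarrow> j \<le> d \<Longrightarrow> \<rho> j h \<ge> (0::real)"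
  shows "dual_sum N \<rho> y d t \<ge> 0"
  using assms
proof (induction d arbitrary: t)
  case (Suc d)
  have "dual_sum N \<rho> y d s \<ge> 0" for s using Suc.prems by (intro Suc.IH) auto
  then show ?case using Suc.prems[of "Suc d"] by (auto intro!: sum_nonneg mult_nonneg_nonneg)
qed simp

lemma dual_sum_mod:
  assumes "N > 0"
  shows "dual_sum N \<phi> y d (t mod int N) = dual_sum N \<phi> y d t"
proof (induction d arbitrary: t)
  case 0 then show ?case by (simp add: dvd_eq_mod_eq_0)
next
  case (Suc d)
  have "dual_sum N \<phi> y d (t mod int N + h * y (Suc d)) = dual_sum N \<phi> y d (t + h * y (Suc d))" for h
    by (metis Suc mod_add_left_eq)
  then show ?case by simp
qed

lemma dual_sum_cong:
  assumes "\<And>j. j \<in> {1..d} \<Longrightarrow> y j = y' j" "\<And>j h. j \<in> {1..d} \<Longrightarrow> \<phi> j h = \<phi>' j h"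
  shows "dual_sum N \<phi> y d t = dual_sum N \<phi>' y' d t"
  using assms
proof (induction d arbitrary: t)
  case (Suc d)
  have "dual_sum N \<phi> y d s = dual_sum N \<phi>' y' d s" for s using Suc.prems by (intro Suc.IH) auto
  then show ?case using Suc.prems(1,2)[of "Suc d"] by simp
qed simp

lemma dual_sum_eq_sum_residues:
  assumes "N > 0"
  shows "dual_sum N \<phi> y d x = (\<Sum>t<N. dual_sum N \<phi> y d (int t) * (if int N dvd x - int t then 1 else 0))"
proof -
  let ?t0 = "nat (x mod int N)"
  have "int N dvd x - int t \<longleftrightarrow> t = ?t0" if "t < N" for t
  proof -
    have "int N dvd x - int t \<longleftrightarrow> x mod int N = int t mod int N" by (simp add: mod_eq_dvd_iff)
    then have "int N dvd x - int t \<longleftrightarrow> x mod int N = int t" using that by simp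
    then show ?thesis using assms by auto
  qed
  then have "(\<Sum>t<N. dual_sum N \<phi> y d (int t) * (if int N dvd x - int t then 1 else 0))
      = (\<Sum>t<N. if t = ?t0 then dual_sum N \<phi> y d (int t) else 0)"
    by (intro sum.cong refl) simp
  also have "\<dots> = dual_sum N \<phi> y d (x mod int N)" using assms by (simp add: nat_less_iff)
  also have "\<dots> = dual_sum N \<phi> y d x" by (rule dual_sum_mod[OF assms])
  finally show ?thesis by (rule sym)
qed

lemma sum_residues_shift:
  fixes f :: "int \<Rightarrow> 'a::comm_monoid_add"
  assumes "N > 0" "\<And>t. f (t mod int N) = f t"
  shows "(\<Sum>t<N. f (int t + c)) = (\<Sum>t<N. f (int t))"
proof -
  let ?g = "\<lambda>t. nat ((int t + c) mod int N)"
  have inj: "inj_on ?g {..<N}"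
  proof
    fix a b assume ab: "a \<in> {..<N}" "b \<in> {..<N}" "?g a = ?g b"
    then have "(int a + c) mod int N = (int b + c) mod int N" using assms(1)
      by (metis nat_eq_iff2 pos_mod_sign of_nat_0_less_iff)
    then have "int a mod int N = int b mod int N" by (metis add_diff_cancel_right' mod_diff_left_eq)
    then show "a = b" using ab by simp
  qed
  have "?g ` {..<N} \<subseteq> {..<N}" using assms(1) by (auto simp: nat_less_iff)
  then have im: "?g ` {..<N} = {..<N}" using inj by (intro endo_inj_surj) auto
  have "(\<Sum>t<N. f (int t + c)) = (\<Sum>t<N. f (int (?g t)))"
    using assms by (intro sum.cong refl) (metis nat_0_le of_nat_0_less_iff pos_mod_sign)
  also have "\<dots> = (\<Sum>t\<in>?g ` {..<N}. f (int t))" by (simp add: sum.reindex[OF inj])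
  finally show ?thesis using im by simp
qed

lemma sum_dual_sum_residues:
  assumes "N > 0"
  shows "(\<Sum>t<N. dual_sum N \<phi> y d (int t)) = (\<Prod>j\<in>{1..d}. \<Sum>h\<in>freqs0 N. \<phi> j h)"
proof (induction d)
  case 0
  have "(\<Sum>t<N. (if int N dvd int t then 1 else 0 :: 'a)) = (\<Sum>t<N. if t = 0 then 1 else 0)"
    by (intro sum.cong refl) (auto dest: dvd_imp_le)
  then show ?case using assms by simp
next
  case (Suc d)
  have "(\<Sum>t<N. dual_sum N \<phi> y (Suc d) (int t))
      = (\<Sum>h\<in>freqs0 N. \<phi> (Suc d) h * (\<Sum>t<N. dual_sum N \<phi> y d (int t + h * y (Suc d))))"
    by (simp add: sum_distrib_left) (rule sum.swap)
  also have "\<dots> = (\<Sum>h\<in>freqs0 N. \<phi> (Suc d) h * (\<Sum>t<N. dual_sum N \<phi> y d (int t)))"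
    by (intro sum.cong refl arg_cong2[where f="(*)"] sum_residues_shift assms dual_sum_mod)
  finally show ?case using Suc by (simp add: prod.cl_ivl_Suc sum_distrib_right[symmetric] mult.commute)
qed

lemma norm_dual_sum_le:
  fixes \<phi> :: "nat \<Rightarrow> int \<Rightarrow> complex" and \<rho> :: "nat \<Rightarrow> int \<Rightarrow> real"
  assumes "\<And>j h. 1 \<le> j \<Longrightarrow> j \<le> d \<Longrightarrow> h \<in> freqs0 N \<Longrightarrow> norm (\<phi> j h) \<le> \<rho> j h"
  shows "norm (dual_sum N \<phi> y d t) \<le> dual_sum N \<rho> y d t"
  using assms
proof (induction d arbitrary: t)
  case (Suc d)
  have IH: "norm (dual_sum N \<phi> y d s) \<le> dual_sum N \<rho> y d s" for s using Suc.prems by (intro Suc.IH) auto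
  have "norm (dual_sum N \<phi> y (Suc d) t)
      \<le> (\<Sum>h\<in>freqs0 N. norm (\<phi> (Suc d) h) * norm (dual_sum N \<phi> y d (t + h * y (Suc d))))"
    by (auto intro!: order.trans[OF norm_sum] sum_mono norm_mult_ineq)
  also have "\<dots> \<le> (\<Sum>h\<in>freqs0 N. \<rho> (Suc d) h * dual_sum N \<rho> y d (t + h * y (Suc d)))"
  proof (intro sum_mono mult_mono IH)
    fix h assume "h \<in> freqs0 N"
    then show "norm (\<phi> (Suc d) h) \<le> \<rho> (Suc d) h" using Suc.prems[of "Suc d" h] by simp
    then show "0 \<le> \<rho> (Suc d) h" using norm_ge_zero order_trans by blast
  qed simp
  finally show ?case by simp
qed simp

text \<open>Every non-zero frequency vector has a non-zero coordinate, where \<open>\<phi>\<close> is dominated by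
  \<open>\<rho> / 2\<close>.\<close>

lemma norm_dual_sum_minus_zero_freq_le:
  fixes \<phi> :: "nat \<Rightarrow> int \<Rightarrow> complex" and \<rho> :: "nat \<Rightarrow> int \<Rightarrow> real"
  assumes zero: "\<And>j. 1 \<le> j \<Longrightarrow> j \<le> d \<Longrightarrow> norm (\<phi> j 0) \<le> \<rho> j 0"
    and nonzero: "\<And>j h. 1 \<le> j \<Longrightarrow> j \<le> d \<Longrightarrow> h \<in> freqs N \<Longrightarrow> 2 * norm (\<phi> j h) \<le> \<rho> j h"
  shows "norm (dual_sum N \<phi> y d t - (if int N dvd t then (\<Prod>j\<in>{1..d}. \<phi> j 0) else 0))
         \<le> (dual_sum N \<rho> y d t - (if int N dvd t then (\<Prod>j\<in>{1..d}. \<rho> j 0) else 0)) / 2"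
  using zero nonzero
proof (induction d arbitrary: t)
  case (Suc d)
  let ?A = "dual_sum N \<phi> y d" and ?B = "dual_sum N \<rho> y d"
  let ?P = "if int N dvd t then (\<Prod>j\<in>{1..d}. \<phi> j 0) else 0"
  let ?Pr = "if int N dvd t then (\<Prod>j\<in>{1..d}. \<rho> j 0) else 0"
  let ?T = "\<Sum>h\<in>freqs N. \<phi> (Suc d) h * ?A (t + h * y (Suc d))"
  let ?Tr = "\<Sum>h\<in>freqs N. \<rho> (Suc d) h * ?B (t + h * y (Suc d))"
  have IH: "norm (?A t - ?P) \<le> (?B t - ?Pr) / 2"
    using Suc.prems by (intro Suc.IH) auto
  have p0: "norm (\<phi> (Suc d) 0) \<le> \<rho> (Suc d) 0" using Suc.prems(1)[of "Suc d"] by simp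
  have ph: "norm (\<phi> (Suc d) h) \<le> \<rho> (Suc d) h / 2" if "h \<in> freqs N" for h
    using Suc.prems(2)[of "Suc d" h] that by simp
  have ph0: "0 \<le> \<rho> (Suc d) h" if "h \<in> freqs N" for h
    using ph[OF that] norm_ge_zero[of "\<phi> (Suc d) h"] by linarith
  have bound: "norm (?A s) \<le> ?B s" for s
  proof (rule norm_dual_sum_le)
    fix j h assume j: "1 \<le> j" "j \<le> d" and h: "h \<in> freqs0 N"
    show "norm (\<phi> j h) \<le> \<rho> j h"
    proof (cases "h = 0")
      case False
      then have "2 * norm (\<phi> j h) \<le> \<rho> j h" using Suc.prems(2)[of j h] j h by (simp add: freqs0_def)
      then show ?thesis using norm_ge_zero[of "\<phi> j h"] by linarith
    qed (use Suc.prems(1)[of j] j in simp)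
  qed
  have "norm ?T \<le> (\<Sum>h\<in>freqs N. norm (\<phi> (Suc d) h) * norm (?A (t + h * y (Suc d))))"
    by (auto intro!: order.trans[OF norm_sum] sum_mono norm_mult_ineq)
  also have "\<dots> \<le> (\<Sum>h\<in>freqs N. (\<rho> (Suc d) h / 2) * ?B (t + h * y (Suc d)))"
    by (intro sum_mono mult_mono bound ph) (auto simp: ph0)
  finally have T: "norm ?T \<le> ?Tr / 2" by (simp add: sum_divide_distrib)
  have "dual_sum N \<phi> y (Suc d) t - \<phi> (Suc d) 0 * ?P = \<phi> (Suc d) 0 * (?A t - ?P) + ?T"
    unfolding dual_sum_Suc_split by (simp add: algebra_simps)
  then have "norm (dual_sum N \<phi> y (Suc d) t - \<phi> (Suc d) 0 * ?P)
      \<le> norm (\<phi> (Suc d) 0) * norm (?A t - ?P) + norm ?T"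
    using norm_triangle_ineq[of "\<phi> (Suc d) 0 * (?A t - ?P)" ?T] by (simp only: norm_mult)
  also have "\<dots> \<le> \<rho> (Suc d) 0 * ((?B t - ?Pr) / 2) + ?Tr / 2"
    using p0 IH T by (intro add_mono mult_mono) (auto intro: order.trans[OF norm_ge_zero])
  also have "\<dots> = (\<rho> (Suc d) 0 * (?B t - ?Pr) + ?Tr) / 2"
    by (simp only: add_divide_distrib times_divide_eq_right)
  also have "\<rho> (Suc d) 0 * (?B t - ?Pr) + ?Tr = dual_sum N \<rho> y (Suc d) t - \<rho> (Suc d) 0 * ?Pr"
    unfolding dual_sum_Suc_split by (simp only: right_diff_distrib)
  moreover have "(if int N dvd t then (\<Prod>j\<in>{1..Suc d}. \<phi> j 0) else 0) = \<phi> (Suc d) 0 * ?P"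
    "(if int N dvd t then (\<Prod>j\<in>{1..Suc d}. \<rho> j 0) else 0) = \<rho> (Suc d) 0 * ?Pr"
    by (simp_all add: prod.cl_ivl_Suc)
  ultimately show ?case by simp
qed simp

section \<open>The criterion as a dual-lattice sum\<close>

definition kernel_coeff :: "(nat \<Rightarrow> real) \<Rightarrow> (nat \<Rightarrow> real) \<Rightarrow> nat \<Rightarrow> int \<Rightarrow> real" where
  "kernel_coeff \<beta> \<gamma> j h = (if h = 0 then \<beta> j else \<gamma> j / real_of_int \<bar>h\<bar>)"

lemma kernel_coeff_nonneg: "0 \<le> \<beta> j \<Longrightarrow> 0 \<le> \<gamma> j \<Longrightarrow> 0 \<le> kernel_coeff \<beta> \<gamma> j h"
  by (simp add: kernel_coeff_def)

lemma kernel_eq_sum_kernel_coeff: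
  "complex_of_real (\<beta> j) + complex_of_real (\<gamma> j) *
     (\<Sum>h\<in>freqs N. exp (2 * pi * \<i> * of_int h * of_nat k * of_int (y j) / of_nat N) / of_int \<bar>h\<bar>)
   = (\<Sum>h\<in>freqs0 N. of_real (kernel_coeff \<beta> \<gamma> j h) * addchar N (int k * h * y j))"
proof -
  have abs_eq: "complex_of_real \<bar>real_of_int h\<bar> = of_int \<bar>h\<bar>" for h
    by (metis of_int_abs of_real_of_int_eq)
  have "(\<Sum>h\<in>freqs N. of_real (kernel_coeff \<beta> \<gamma> j h) * addchar N (int k * h * y j))
     = complex_of_real (\<gamma> j) *
       (\<Sum>h\<in>freqs N. exp (2 * pi * \<i> * of_int h * of_nat k * of_int (y j) / of_nat N) / of_int \<bar>h\<bar>)"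
    unfolding sum_distrib_left
    by (intro sum.cong refl) (auto simp: kernel_coeff_def addchar_def mult_ac abs_eq)
  then show ?thesis unfolding freqs0_def by (simp add: kernel_coeff_def)
qed

lemma Re_R_crit_eq_dual_sum:
  assumes "N > 0"
  shows "Re (R_crit d N \<beta> \<gamma> y) = dual_sum N (kernel_coeff \<beta> \<gamma>) y d 0 - (\<Prod>j\<in>{1..d}. \<beta> j)"
proof -
  have "R_crit d N \<beta> \<gamma> y = (1 / of_nat N) * (\<Sum>k<N. (\<Prod>j\<in>{1..d}. \<Sum>h\<in>freqs0 N.
        of_real (kernel_coeff \<beta> \<gamma> j h) * addchar N (int k * h * y j)) * addchar N (int k * 0))
     - (\<Prod>j\<in>{1..d}. complex_of_real (\<beta> j))"
    unfolding R_crit_def kernel_eq_sum_kernel_coeff by simp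
  also have "\<dots> = of_real (dual_sum N (kernel_coeff \<beta> \<gamma>) y d 0 - (\<Prod>j\<in>{1..d}. \<beta> j))"
    by (subst dual_sum_Fourier[OF assms]) (simp add: dual_sum_of_real)
  finally show ?thesis by (metis Re_complex_of_real)
qed

lemma dual_sum_kernel_Suc:
  "dual_sum N (kernel_coeff \<beta> \<gamma>) y (Suc d) 0 = \<beta> (Suc d) * dual_sum N (kernel_coeff \<beta> \<gamma>) y d 0
     + \<gamma> (Suc d) * (\<Sum>g\<in>freqs N. dual_sum N (kernel_coeff \<beta> \<gamma>) y d (g * y (Suc d)) / real_of_int \<bar>g\<bar>)"
  unfolding dual_sum_Suc_split sum_distrib_left
  by (intro arg_cong2[where f="(+)"] sum.cong refl) (auto simp: kernel_coeff_def)

lemma sum_kernel_coeff: "(\<Sum>h\<in>freqs0 N. kernel_coeff \<beta> \<gamma> j h) = \<beta> j + \<gamma> j * S_N N"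
proof -
  have "(\<Sum>h\<in>freqs N. kernel_coeff \<beta> \<gamma> j h) = \<gamma> j * S_N N"
    unfolding S_N_def sum_distrib_left by (intro sum.cong refl) (auto simp: kernel_coeff_def)
  then show ?thesis unfolding freqs0_def by (simp add: kernel_coeff_def)
qed


section \<open>Counting solutions of linear congruences\<close>

lemma card_le_div_if_pairwise_cong:
  fixes A :: "nat set"
  assumes "A \<subseteq> {..<M}" "L > 0" "L dvd M"
    and "\<And>a c. a \<in> A \<Longrightarrow> c \<in> A \<Longrightarrow> int L dvd int a - int c"
  shows "card A \<le> M div L"
proof -
  have inj: "inj_on (\<lambda>a. a div L) A"
  proof
    fix a c assume ac: "a \<in> A" "c \<in> A" "a div L = c div L"
    have "int a mod int L = int c mod int L" using assms(4)[OF ac(1,2)] by (simp add: mod_eq_dvd_iff)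
    then have "a mod L = c mod L" by (metis of_nat_eq_iff of_nat_mod)
    then show "a = c" using ac(3) by (metis div_mult_mod_eq)
  qed
  have "(\<lambda>a. a div L) ` A \<subseteq> {..<M div L}"
  proof
    fix x assume "x \<in> (\<lambda>a. a div L) ` A"
    then obtain a where a: "a \<in> A" "x = a div L" by auto
    have "a < M" using a assms(1) by auto
    then show "x \<in> {..<M div L}" using a assms(2,3)
      by (metis dvd_div_mult_self less_mult_imp_div_less lessThan_iff)
  qed
  then have "card ((\<lambda>a. a div L) ` A) \<le> M div L"
    by (metis card_lessThan card_mono finite_lessThan)
  then show ?thesis using card_image[OF inj] by simp
qed

lemma dvd_div_gcd_if_dvd_mult:
  fixes M g x :: int
  assumes "M dvd g * x" "M > 0"
  shows "M div gcd g M dvd x"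
proof -
  let ?G = "gcd g M"
  have "?G * (M div ?G) = M" "?G * (g div ?G * x) = g * x"
    by (simp_all add: mult.assoc[symmetric])
  then have "?G * (M div ?G) dvd ?G * (g div ?G * x)" using assms(1) by metis
  moreover have "?G \<noteq> 0" using assms(2) by simp
  ultimately have "M div ?G dvd g div ?G * x" using dvd_mult_cancel_left by blast
  moreover have "coprime (M div ?G) (g div ?G)"
    using div_gcd_coprime[of g M] assms(2) by (simp add: coprime_commute)
  ultimately show ?thesis by (simp add: coprime_dvd_mult_right_iff)
qed

lemma gcd_eq_if_Zset_solution:
  fixes g t :: int
  assumes "w < m" "z \<in> Zset b m w" "int (b ^ m) dvd g * int (b ^ w) * int z - t"
  shows "gcd t (int (b ^ m)) = int (b ^ w) * gcd g (int (b ^ (m - w)))"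
proof -
  have "coprime z (b ^ m)" using assms(1,2) by (simp add: Zset_def coprime_iff_gcd_eq_1)
  then have cop: "coprime (int z) (int (b ^ m))" by (simp only: coprime_int_iff)
  obtain q where "g * int (b ^ w) * int z - t = int (b ^ m) * q" using assms(3) by (auto elim!: dvdE)
  then have "t = g * int (b ^ w) * int z + q * (- int (b ^ m))" by (simp add: algebra_simps)
  then have "gcd t (int (b ^ m)) = gcd (g * int (b ^ w) * int z) (int (b ^ m))"
    by (smt (verit) gcd.commute gcd_add_mult gcd_neg1_int)
  also have "\<dots> = gcd (g * int (b ^ w)) (int (b ^ m))"
    using cop by (simp add: gcd_mult_left_right_cancel coprime_commute)
  also have "\<dots> = gcd (int (b ^ w) * g) (int (b ^ w) * int (b ^ (m - w)))"
    using assms(1) by (simp add: mult.commute flip: power_add)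
  also have "\<dots> = int (b ^ w) * gcd g (int (b ^ (m - w)))"
    by (simp add: gcd_mult_distrib_int[symmetric])
  finally show ?thesis .
qed

lemma card_Zset_solutions_le:
  fixes g t :: int
  assumes "b > 0" "w < m"
  shows "card {z \<in> Zset b m w. int (b ^ m) dvd g * int (b ^ w) * int z - t} \<le> nat (gcd g (int (b ^ (m - w))))"
proof -
  let ?M = "b ^ (m - w)" and ?B = "b ^ w"
  let ?G = "nat (gcd g (int ?M))"
  let ?L = "?M div ?G"
  have NBM: "b ^ m = ?B * ?M" using assms(2) by (simp flip: power_add)
  have M0: "?M > 0" "?B > 0" using assms(1) by simp_all
  have "?G > 0" using assms by simp
  moreover have GdM: "?G dvd ?M" by (simp add: nat_dvd_iff)
  ultimately have L0: "?L > 0" using dvd_imp_le[OF GdM M0(1)] by (simp add: div_greater_zero_iff)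
  have MLG: "?M = ?L * ?G" using GdM by simp
  have "card {z \<in> Zset b m w. int (b ^ m) dvd g * int ?B * int z - t} \<le> ?M div ?L"
  proof (rule card_le_div_if_pairwise_cong)
    show "{z \<in> Zset b m w. int (b ^ m) dvd g * int ?B * int z - t} \<subseteq> {..<?M}"
      using assms(2) by (auto simp: Zset_def)
    show "?L dvd ?M" using MLG by (metis dvd_triv_left)
    fix a c assume "a \<in> {z \<in> Zset b m w. int (b ^ m) dvd g * int ?B * int z - t}"
                   "c \<in> {z \<in> Zset b m w. int (b ^ m) dvd g * int ?B * int z - t}"
    then have "int (b ^ m) dvd g * int ?B * int a - t" "int (b ^ m) dvd g * int ?B * int c - t"
      by auto
    then have "int (b ^ m) dvd (g * int ?B * int a - t) - (g * int ?B * int c - t)"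
      by (rule dvd_diff)
    then have "int ?B * int ?M dvd int ?B * (g * (int a - int c))"
      by (simp add: NBM algebra_simps)
    then have "int ?M dvd g * (int a - int c)" using assms(1) by simp
    then have "int ?M div gcd g (int ?M) dvd int a - int c"
      using M0 by (intro dvd_div_gcd_if_dvd_mult) auto
    then show "int ?L dvd int a - int c" by (simp add: zdiv_int)
  qed (use L0 in simp)
  also have "?M div ?L = ?G" using L0 MLG by (metis nonzero_mult_div_cancel_left less_irrefl)
  finally show ?thesis .
qed

lemma sum_freqs_multiples_le_S_N:
  fixes G :: int
  assumes "G > 0"
  shows "(\<Sum>g\<in>{g\<in>freqs N. G dvd g}. real_of_int G / real_of_int \<bar>g\<bar>) \<le> S_N N"
proof -
  let ?A = "{g\<in>freqs N. G dvd g}"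
  have inj: "inj_on (\<lambda>g. g div G) ?A"
    by (rule inj_onI) (use assms in \<open>auto elim!: dvdE\<close>)
  have "(\<lambda>g. g div G) ` ?A \<subseteq> freqs N"
  proof
    fix x assume "x \<in> (\<lambda>g. g div G) ` ?A"
    then obtain q where q: "G * q \<in> freqs N" "x = q" using assms by (auto elim!: dvdE)
    then have "q \<noteq> 0" "- (real N / 2) < real_of_int G * real_of_int q"
      "real_of_int G * real_of_int q \<le> real N / 2"
      unfolding freqs_def by auto
    moreover have "real_of_int G \<ge> 1" using assms by simp
    then have "0 < real_of_int q \<Longrightarrow> real_of_int q \<le> real_of_int G * real_of_int q"
      "\<not> 0 < real_of_int q \<Longrightarrow> real_of_int G * real_of_int q \<le> real_of_int q"
      by (simp_all add: mult_le_cancel_right1 mult_le_cancel_right2)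
    ultimately have "- (real N / 2) < real_of_int q \<and> real_of_int q \<le> real N / 2"
      by (smt (verit) of_nat_0_le_iff)
    then show "x \<in> freqs N" using q \<open>q \<noteq> 0\<close> unfolding freqs_def by auto
  qed
  moreover have "real_of_int G / real_of_int \<bar>g\<bar> = 1 / real_of_int \<bar>g div G\<bar>" if "g \<in> ?A" for g
    using that assms by (auto elim!: dvdE simp: abs_mult)
  ultimately have "(\<Sum>g\<in>?A. real_of_int G / real_of_int \<bar>g\<bar>) = (\<Sum>x\<in>(\<lambda>g. g div G) ` ?A. 1 / real_of_int \<bar>x\<bar>)"
    by (simp add: sum.reindex[OF inj])
  also have "\<dots> \<le> S_N N" unfolding S_N_def
    by (rule sum_mono2[OF finite_freqs \<open>_ \<subseteq> freqs N\<close>]) simp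
  finally show ?thesis .
qed

text \<open>The bound depends on \<open>g\<close> only through \<open>G | g\<close>, with \<open>G\<close> determined by \<open>t\<close>.\<close>

lemma card_Zset_solutions_le_gcd:
  fixes g t :: int
  assumes "b > 0" "w < m"
  defines "G \<equiv> gcd t (int (b ^ m)) div int (b ^ w)"
  shows "real (card {z \<in> Zset b m w. int (b ^ m) dvd g * int (b ^ w) * int z - t})
           \<le> (if G dvd g then real_of_int G else 0)"
proof (cases "{z \<in> Zset b m w. int (b ^ m) dvd g * int (b ^ w) * int z - t} = {}")
  case False
  then obtain z where "z \<in> Zset b m w" "int (b ^ m) dvd g * int (b ^ w) * int z - t" by auto
  then have G: "G = gcd g (int (b ^ (m - w)))"
    using gcd_eq_if_Zset_solution[OF assms(2)] assms(1) unfolding G_def by simp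
  have "int (card {z \<in> Zset b m w. int (b ^ m) dvd g * int (b ^ w) * int z - t}) \<le> G"
    using card_Zset_solutions_le[OF assms(1,2), of g t] unfolding G by (simp add: le_nat_iff)
  then have "real (card {z \<in> Zset b m w. int (b ^ m) dvd g * int (b ^ w) * int z - t}) \<le> real_of_int G"
    by linarith
  then show ?thesis unfolding G by simp
next
  case True
  moreover have "0 \<le> G" unfolding G_def by (simp add: div_int_pos_iff)
  ultimately show ?thesis by (simp only: card.empty of_nat_0) simp
qed

lemma sum_Zset_solution_weights_le_S_N:
  fixes t :: int
  assumes "b > 0"
  shows "(\<Sum>z\<in>Zset b m w. \<Sum>g\<in>freqs (b ^ m).
            (if int (b ^ m) dvd g * int (b ^ w) * int z - t then 1 / real_of_int \<bar>g\<bar> else 0)) \<le> S_N (b ^ m)"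
proof (cases "w < m")
  case False
  then have "Zset b m w = {1}" by (simp add: Zset_def)
  moreover have "(\<Sum>g\<in>freqs (b ^ m).
      (if int (b ^ m) dvd g * int (b ^ w) * 1 - t then 1 / real_of_int \<bar>g\<bar> else 0)) \<le> S_N (b ^ m)"
    unfolding S_N_def by (intro sum_mono) auto
  ultimately show ?thesis by simp
next
  case True
  let ?N = "b ^ m" and ?A = "\<lambda>g. {z \<in> Zset b m w. int (b ^ m) dvd g * int (b ^ w) * int z - t}"
  define G where "G = gcd t (int ?N) div int (b ^ w)"
  have G0: "0 \<le> G" unfolding G_def by (simp add: div_int_pos_iff)
  have "(\<Sum>z\<in>Zset b m w. (if int ?N dvd g * int (b ^ w) * int z - t then 1 / real_of_int \<bar>g\<bar> else 0))
      = real (card (?A g)) / real_of_int \<bar>g\<bar>" for g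
    by (simp add: sum.inter_filter[symmetric] Zset_def)
  then have "(\<Sum>z\<in>Zset b m w. \<Sum>g\<in>freqs ?N.
            (if int ?N dvd g * int (b ^ w) * int z - t then 1 / real_of_int \<bar>g\<bar> else 0))
      = (\<Sum>g\<in>freqs ?N. real (card (?A g)) / real_of_int \<bar>g\<bar>)"
    by (subst sum.swap) simp
  also have "\<dots> \<le> (\<Sum>g\<in>freqs ?N. (if G dvd g then real_of_int G / real_of_int \<bar>g\<bar> else 0))"
  proof (intro sum_mono)
    fix g
    show "real (card (?A g)) / real_of_int \<bar>g\<bar> \<le> (if G dvd g then real_of_int G / real_of_int \<bar>g\<bar> else 0)"
      using card_Zset_solutions_le_gcd[OF assms True, of g t] unfolding G_def
      by (cases "G dvd g") (simp_all add: G_def divide_right_mono)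
  qed
  also have "\<dots> = (\<Sum>g\<in>{g\<in>freqs ?N. G dvd g}. real_of_int G / real_of_int \<bar>g\<bar>)"
    by (rule sum.inter_filter[OF finite_freqs, symmetric])
  also have "\<dots> \<le> S_N ?N"
  proof (cases "G = 0")
    case False
    then show ?thesis using G0 by (intro sum_freqs_multiples_le_S_N) simp
  qed (simp add: S_N_nonneg)
  finally show ?thesis .
qed

lemma card_Zset_ge:
  assumes "prime b" "w < m"
  shows "real (b ^ (m - w)) / 2 \<le> real (card (Zset b m w))"
proof -
  let ?M = "b ^ (m - w)"
  have b2: "b \<ge> 2" using assms(1) prime_ge_2_nat by blast
  let ?Z' = "{z \<in> {1 .. ?M - 1}. \<not> b dvd z}"
  let ?C = "{z \<in> {1 .. ?M - 1}. b dvd z}"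
  have "?Z' \<subseteq> Zset b m w"
  proof
    fix z assume z: "z \<in> ?Z'"
    then have "coprime z (b ^ m)" using assms(1) by (simp add: prime_imp_coprime coprime_commute)
    then show "z \<in> Zset b m w" using z assms(2) by (simp add: Zset_def coprime_iff_gcd_eq_1)
  qed
  then have "card ?Z' \<le> card (Zset b m w)" by (intro card_mono) (simp_all add: Zset_def)
  moreover have "card ?Z' + card ?C = ?M - 1"
  proof -
    have "?Z' \<union> ?C = {1 .. ?M - 1}" "?Z' \<inter> ?C = {}" by auto
    then show ?thesis using card_Un_disjoint[of ?Z' ?C] by simp
  qed
  moreover have "?C \<subseteq> (\<lambda>k. b * k) ` {1..<?M div b}"
  proof
    fix z assume z: "z \<in> ?C"
    then obtain k where k: "z = b * k" by (auto elim!: dvdE)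
    have "?M \<ge> 1" "z \<le> ?M - 1" using b2 z by simp_all
    then have "b * k < ?M" using k by linarith
    moreover have "?M = b * b ^ (m - w - 1)"
      using assms(2) by (metis Suc_diff_Suc diff_Suc_1 power_Suc zero_less_diff)
    ultimately have "k < ?M div b" using b2 by simp
    moreover have "k \<ge> 1" using z k by (cases k) auto
    ultimately show "z \<in> (\<lambda>k. b * k) ` {1..<?M div b}" using k by auto
  qed
  then have "card ?C \<le> ?M div b - 1"
    using card_image_le[of "{1..<?M div b}" "\<lambda>k. b * k"] card_mono[of "(\<lambda>k. b * k) ` {1..<?M div b}" ?C]
    by simp
  moreover have "2 * (?M div b) \<le> ?M" using b2
    by (meson dual_order.trans mult_le_mono1 times_div_less_eq_dividend)
  moreover have "?M \<ge> b" using assms(2) b2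
    by (metis One_nat_def Suc_leI power_increasing power_one_right zero_less_diff le_trans one_le_numeral)
  then have "?M div b \<ge> 1" using b2 by (metis One_nat_def div_le_mono div_self not_numeral_le_zero)
  ultimately show ?thesis by linarith
qed

lemma card_Zset_bound:
  assumes "prime b"
  shows "real (b ^ m) \<le> real (card (Zset b m w)) * (2 * real b ^ min w m)" and "card (Zset b m w) > 0"
proof -
  have "real (b ^ m) \<le> real (card (Zset b m w)) * (2 * real b ^ min w m) \<and> card (Zset b m w) > 0"
  proof (cases "w < m")
    case True
    have b0: "b > 0" using assms prime_gt_0_nat by blast
    have NBM: "real (b ^ m) = real b ^ w * real (b ^ (m - w))" using True by (simp flip: power_add)
    have c: "real (b ^ (m - w)) / 2 \<le> real (card (Zset b m w))" by (rule card_Zset_ge[OF assms True])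
    moreover have "real (b ^ (m - w)) > 0" using b0 by simp
    ultimately have "card (Zset b m w) > 0" by linarith
    moreover have "real (b ^ (m - w)) / 2 * (2 * real b ^ w) \<le> real (card (Zset b m w)) * (2 * real b ^ w)"
      using c b0 by (intro mult_right_mono) auto
    ultimately show ?thesis using True NBM by (simp add: mult_ac)
  qed (simp add: Zset_def)
  then show "real (b ^ m) \<le> real (card (Zset b m w)) * (2 * real b ^ min w m)" "card (Zset b m w) > 0"
    by auto
qed

section \<open>The reduced CBC construction\<close>

lemma sum_Zset_dual_sum_le:
  assumes "b > 0" "\<And>j h. 1 \<le> j \<Longrightarrow> j \<le> d \<Longrightarrow> \<rho> j h \<ge> (0::real)"
  shows "(\<Sum>z\<in>Zset b m w. \<Sum>g\<in>freqs (b ^ m). dual_sum (b ^ m) \<rho> y d (g * int (b ^ w * z)) / real_of_int \<bar>g\<bar>)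
         \<le> S_N (b ^ m) * (\<Sum>t<b ^ m. dual_sum (b ^ m) \<rho> y d (int t))"
proof -
  let ?N = "b ^ m"
  let ?A = "\<lambda>t. dual_sum ?N \<rho> y d t"
  let ?K = "\<lambda>t z g. if int ?N dvd g * int (b ^ w) * int z - int t then 1 / real_of_int \<bar>g\<bar> else 0"
  have N0: "?N > 0" using assms(1) by simp
  have "?A (g * int (b ^ w * z)) / real_of_int \<bar>g\<bar> = (\<Sum>t<?N. ?A (int t) * ?K t z g)" for z g
    by (subst dual_sum_eq_sum_residues[OF N0])
       (unfold sum_divide_distrib, intro sum.cong refl, simp add: mult.assoc)
  then have "(\<Sum>z\<in>Zset b m w. \<Sum>g\<in>freqs ?N. ?A (g * int (b ^ w * z)) / real_of_int \<bar>g\<bar>)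
      = (\<Sum>z\<in>Zset b m w. \<Sum>t<?N. \<Sum>g\<in>freqs ?N. ?A (int t) * ?K t z g)"
    by (simp add: sum.swap[of _ "freqs ?N"])
  also have "\<dots> = (\<Sum>t<?N. ?A (int t) * (\<Sum>z\<in>Zset b m w. \<Sum>g\<in>freqs ?N. ?K t z g))"
    by (subst sum.swap) (simp add: sum_distrib_left)
  also have "\<dots> \<le> (\<Sum>t<?N. ?A (int t) * S_N ?N)"
    using assms(2) by (intro sum_mono mult_left_mono sum_Zset_solution_weights_le_S_N assms(1) dual_sum_nonneg) auto
  finally show ?thesis by (simp add: sum_distrib_left mult.commute)
qed

lemma sum_freqs_dvd_le:
  assumes "b > 0"
  shows "(\<Sum>g\<in>freqs (b ^ m). (if int (b ^ m) dvd g * int (b ^ w) then 1 else 0) / real_of_int \<bar>g\<bar>)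
         \<le> S_N (b ^ m) * (2 * real b ^ min w m) / real (b ^ m)"
proof (cases "w < m")
  case False
  have "(\<Sum>g\<in>freqs (b ^ m). (if int (b ^ m) dvd g * int (b ^ w) then 1 else 0) / real_of_int \<bar>g\<bar>)
        \<le> S_N (b ^ m)"
    unfolding S_N_def by (intro sum_mono) (auto simp: divide_right_mono)
  also have "\<dots> \<le> S_N (b ^ m) * (2 * real b ^ min w m) / real (b ^ m)"
    using False assms S_N_nonneg[of "b ^ m"] by simp
  finally show ?thesis .
next
  case True
  let ?M = "b ^ (m - w)"
  have NBM: "b ^ m = b ^ w * ?M" using True by (simp flip: power_add)
  have M0: "?M > 0" using assms by simp
  have "int (b ^ m) dvd g * int (b ^ w) \<longleftrightarrow> int ?M dvd g" for g
    using assms by (simp add: NBM mult.commute)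
  then have "(\<Sum>g\<in>freqs (b ^ m). (if int (b ^ m) dvd g * int (b ^ w) then 1 else 0) / real_of_int \<bar>g\<bar>)
      = (\<Sum>g\<in>freqs (b ^ m). if int ?M dvd g then (1 / real ?M) * (real_of_int (int ?M) / real_of_int \<bar>g\<bar>) else 0)"
    using assms by (intro sum.cong refl) simp
  also have "\<dots> = (1 / real ?M) * (\<Sum>g\<in>{g\<in>freqs (b ^ m). int ?M dvd g}. real_of_int (int ?M) / real_of_int \<bar>g\<bar>)"
    unfolding sum.inter_filter[OF finite_freqs] sum_distrib_left by (intro sum.cong refl) simp
  also have "\<dots> \<le> (1 / real ?M) * S_N (b ^ m)"
    using M0 by (intro mult_left_mono sum_freqs_multiples_le_S_N) auto
  also have "\<dots> \<le> S_N (b ^ m) * (2 * real b ^ min w m) / real (b ^ m)"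
    using True assms S_N_nonneg[of "b ^ m"] by (simp add: NBM field_simps)
  finally show ?thesis .
qed

text \<open>\<open>R_crit\<close> is real-valued (\<open>Re_R_crit_eq_dual_sum\<close>); \<open>Re\<close> only changes its type.\<close>

definition reduced_cbc ::
  "nat \<Rightarrow> nat \<Rightarrow> nat \<Rightarrow> (nat \<Rightarrow> real) \<Rightarrow> (nat \<Rightarrow> nat) \<Rightarrow> (nat \<Rightarrow> nat) \<Rightarrow> bool" where
  "reduced_cbc b m s \<gamma> w z \<longleftrightarrow> z 1 = 1 \<and>
     (\<forall>d\<in>{1..<s}. z (d + 1) \<in> Zset b m (w (d + 1)) \<and>
        (\<forall>z'\<in>Zset b m (w (d + 1)).
           Re (R_crit (d + 1) (b ^ m) (\<lambda>j. 1 + \<gamma> j) \<gamma> (\<lambda>j. int (b ^ w j * z j)))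
           \<le> Re (R_crit (d + 1) (b ^ m) (\<lambda>j. 1 + \<gamma> j) \<gamma>
                 (\<lambda>j. if j = d + 1 then int (b ^ w j * z') else int (b ^ w j * z j)))))"

lemma reduced_cbc_minimal:
  fixes \<gamma> :: "nat \<Rightarrow> real"
  assumes "b > 0" "\<And>j. 1 \<le> j \<Longrightarrow> 0 < \<gamma> j" "reduced_cbc b m s \<gamma> w z" "d \<in> {1..<s}"
    and "z' \<in> Zset b m (w (Suc d))"
  defines "A \<equiv> dual_sum (b ^ m) (kernel_coeff (\<lambda>j. 1 + \<gamma> j) \<gamma>) (\<lambda>j. int (b ^ w j * z j)) d"
  shows "(\<Sum>g\<in>freqs (b ^ m). A (g * int (b ^ w (Suc d) * z (Suc d))) / real_of_int \<bar>g\<bar>)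
    \<le> (\<Sum>g\<in>freqs (b ^ m). A (g * int (b ^ w (Suc d) * z')) / real_of_int \<bar>g\<bar>)"
proof -
  let ?N = "b ^ m" and ?\<rho> = "kernel_coeff (\<lambda>j. 1 + \<gamma> j) \<gamma>" and ?y = "\<lambda>j. int (b ^ w j * z j)"
  let ?y' = "\<lambda>j. if j = d + 1 then int (b ^ w j * z') else int (b ^ w j * z j)"
  have "dual_sum ?N ?\<rho> ?y' d = A"
    unfolding A_def by (intro ext dual_sum_cong) auto
  then have "dual_sum ?N ?\<rho> ?y' (Suc d) 0 = (1 + \<gamma> (Suc d)) * A 0
      + \<gamma> (Suc d) * (\<Sum>g\<in>freqs ?N. A (g * int (b ^ w (Suc d) * z')) / real_of_int \<bar>g\<bar>)"
    by (simp only: dual_sum_kernel_Suc) simp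
  moreover have "dual_sum ?N ?\<rho> ?y (Suc d) 0 = (1 + \<gamma> (Suc d)) * A 0
      + \<gamma> (Suc d) * (\<Sum>g\<in>freqs ?N. A (g * int (b ^ w (Suc d) * z (Suc d))) / real_of_int \<bar>g\<bar>)"
    unfolding A_def by (rule dual_sum_kernel_Suc)
  moreover have "dual_sum ?N ?\<rho> ?y (Suc d) 0 \<le> dual_sum ?N ?\<rho> ?y' (Suc d) 0"
    using assms(1,3,4,5) unfolding reduced_cbc_def by (auto simp: Re_R_crit_eq_dual_sum)
  ultimately show ?thesis using assms(2)[of "Suc d"] by simp
qed

lemma cbc_increment_le:
  fixes \<gamma> :: "nat \<Rightarrow> real"
  assumes b: "prime b" and \<gamma>: "\<And>j. 1 \<le> j \<Longrightarrow> 0 < \<gamma> j"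
    and cbc: "reduced_cbc b m s \<gamma> w z" and "d < s"
  defines "A \<equiv> dual_sum (b ^ m) (kernel_coeff (\<lambda>j. 1 + \<gamma> j) \<gamma>) (\<lambda>j. int (b ^ w j * z j)) d"
  shows "(\<Sum>g\<in>freqs (b ^ m). A (g * int (b ^ w (Suc d) * z (Suc d))) / real_of_int \<bar>g\<bar>)
    \<le> S_N (b ^ m) * (\<Sum>t<b ^ m. A (int t)) * (2 * real b ^ min (w (Suc d)) m) / real (b ^ m)"
proof -
  let ?N = "b ^ m" and ?\<rho> = "kernel_coeff (\<lambda>j. 1 + \<gamma> j) \<gamma>" and ?W = "w (Suc d)"
  let ?X = "\<lambda>z'. \<Sum>g\<in>freqs ?N. A (g * int (b ^ ?W * z')) / real_of_int \<bar>g\<bar>"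
  let ?c = "2 * real b ^ min ?W m"
  have b0: "b > 0" using b prime_gt_0_nat by blast
  have \<rho>_nonneg: "?\<rho> j h \<ge> 0" if "1 \<le> j" for j h
    using \<gamma>[OF that] by (intro kernel_coeff_nonneg) auto
  show ?thesis
  proof (cases "d = 0")
    case True
    have "(\<Sum>t<?N. A (int t)) = (\<Prod>j\<in>{1..d}. \<Sum>h\<in>freqs0 ?N. ?\<rho> j h)"
      unfolding A_def by (rule sum_dual_sum_residues) (simp add: b0)
    then have "(\<Sum>t<?N. A (int t)) = 1" using True by simp
    moreover have "A (g * int (b ^ ?W * z (Suc d))) = (if int ?N dvd g * int (b ^ ?W) then 1 else 0)" for g
      using True cbc by (simp add: A_def reduced_cbc_def)
    ultimately show ?thesis using sum_freqs_dvd_le[OF b0] by simp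
  next
    case False
    let ?Z = "Zset b m ?W"
    have d: "d \<in> {1..<s}" using False \<open>d < s\<close> by auto
    have minimal: "?X (z (Suc d)) \<le> ?X z'" if "z' \<in> ?Z" for z'
      using reduced_cbc_minimal[OF b0 \<gamma> cbc d that] unfolding A_def .
    have X_nonneg: "?X (z (Suc d)) \<ge> 0"
      unfolding A_def using \<rho>_nonneg by (intro sum_nonneg divide_nonneg_nonneg dual_sum_nonneg) auto
    have "real (card ?Z) * ?X (z (Suc d)) \<le> (\<Sum>z'\<in>?Z. ?X z')"
      by (rule sum_bounded_below) (use minimal in auto)
    also have "\<dots> \<le> S_N ?N * (\<Sum>t<?N. A (int t))"
      unfolding A_def using \<rho>_nonneg by (intro sum_Zset_dual_sum_le b0) auto
    finally have avg: "real (card ?Z) * ?X (z (Suc d)) \<le> S_N ?N * (\<Sum>t<?N. A (int t))" .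
    have "?X (z (Suc d)) * real ?N \<le> ?X (z (Suc d)) * (real (card ?Z) * ?c)"
      using X_nonneg card_Zset_bound(1)[OF b] by (intro mult_left_mono) auto
    also have "\<dots> \<le> S_N ?N * (\<Sum>t<?N. A (int t)) * ?c"
      using mult_right_mono[OF avg, of ?c] by (simp add: mult_ac)
    finally show ?thesis using b0 by (simp add: field_simps)
  qed
qed

lemma cbc_step_inequality:
  fixes E X P Q \<beta> \<gamma> S c N :: real
  assumes "E \<le> Q / N" "X \<le> S * P * (2 * c) / N" "P \<le> Q" "0 \<le> P"
    and "0 \<le> \<beta>" "0 \<le> \<gamma>" "0 \<le> S" "0 \<le> c" "0 < N"
  shows "\<beta> * E + \<gamma> * X \<le> Q * (\<beta> + (1 + 2 * c) * \<gamma> * S) / N"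
proof -
  have "S * P * (2 * c) / N \<le> S * Q * (2 * c) / N"
    using assms by (intro divide_right_mono mult_right_mono mult_left_mono) auto
  then have "\<beta> * E + \<gamma> * X \<le> \<beta> * (Q / N) + \<gamma> * (S * Q * (2 * c) / N)"
    using assms by (intro add_mono mult_left_mono) auto
  moreover have "0 \<le> Q * \<gamma> * S / N" using assms by simp
  moreover have "Q * (\<beta> + (1 + 2 * c) * \<gamma> * S) / N
      = \<beta> * (Q / N) + \<gamma> * (S * Q * (2 * c) / N) + Q * \<gamma> * S / N"
    by (simp add: add_divide_distrib algebra_simps)
  ultimately show ?thesis by linarith
qed

lemma sum_dual_sum_kernel_le:
  assumes "N > 0" "\<And>j. 1 \<le> j \<Longrightarrow> 0 \<le> \<gamma> j" "\<And>j. 1 \<le> j \<Longrightarrow> 1 \<le> c j"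
  shows "(\<Sum>t<N. dual_sum N (kernel_coeff (\<lambda>j. 1 + \<gamma> j) \<gamma>) y d (int t))
           \<le> (\<Prod>j\<in>{1..d}. (1 + \<gamma> j) + c j * \<gamma> j * S_N N)"
  unfolding sum_dual_sum_residues[OF assms(1)] sum_kernel_coeff
proof (intro prod_mono conjI)
  fix j assume "j \<in> {1..d}"
  then have "0 \<le> \<gamma> j * S_N N" "1 \<le> c j" "0 \<le> \<gamma> j" using assms(2,3) S_N_nonneg by auto
  moreover from this have "1 * (\<gamma> j * S_N N) \<le> c j * (\<gamma> j * S_N N)" by (intro mult_right_mono)
  ultimately show "0 \<le> 1 + \<gamma> j + \<gamma> j * S_N N" "1 + \<gamma> j + \<gamma> j * S_N N \<le> 1 + \<gamma> j + c j * \<gamma> j * S_N N"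
    by (simp_all add: mult.assoc)
qed

lemma cbc_dual_sum_bound:
  fixes \<gamma> :: "nat \<Rightarrow> real"
  assumes b: "prime b" and \<gamma>: "\<And>j. 1 \<le> j \<Longrightarrow> 0 < \<gamma> j"
    and cbc: "reduced_cbc b m s \<gamma> w z" and "d \<le> s"
  shows "dual_sum (b ^ m) (kernel_coeff (\<lambda>j. 1 + \<gamma> j) \<gamma>) (\<lambda>j. int (b ^ w j * z j)) d 0
           - (\<Prod>j\<in>{1..d}. 1 + \<gamma> j)
         \<le> (\<Prod>j\<in>{1..d}. (1 + \<gamma> j) + (1 + 2 * real b ^ min (w j) m) * \<gamma> j * S_N (b ^ m)) / real (b ^ m)"
  using \<open>d \<le> s\<close>
proof (induction d)
  case (Suc d)
  let ?N = "b ^ m" and ?\<rho> = "kernel_coeff (\<lambda>j. 1 + \<gamma> j) \<gamma>" and ?y = "\<lambda>j. int (b ^ w j * z j)"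
  let ?A = "dual_sum ?N ?\<rho> ?y d"
  let ?Q = "\<lambda>d. \<Prod>j\<in>{1..d}. (1 + \<gamma> j) + (1 + 2 * real b ^ min (w j) m) * \<gamma> j * S_N ?N"
  have N0: "?N > 0" using b prime_gt_0_nat by simp
  have \<gamma>0: "1 \<le> j \<Longrightarrow> 0 \<le> \<gamma> j" for j using \<gamma>[of j] by simp
  have \<rho>0: "0 \<le> ?\<rho> j h" if "1 \<le> j" for j h using \<gamma>0[OF that] by (intro kernel_coeff_nonneg) auto
  have "(\<Sum>t<?N. ?A (int t)) \<le> ?Q d"
    using N0 \<gamma>0 by (intro sum_dual_sum_kernel_le) auto
  moreover have "0 \<le> (\<Sum>t<?N. ?A (int t))" using \<rho>0 by (intro sum_nonneg dual_sum_nonneg)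
  moreover have "dual_sum ?N ?\<rho> ?y (Suc d) 0 - (\<Prod>j\<in>{1..Suc d}. 1 + \<gamma> j)
      = (1 + \<gamma> (Suc d)) * (?A 0 - (\<Prod>j\<in>{1..d}. 1 + \<gamma> j))
        + \<gamma> (Suc d) * (\<Sum>g\<in>freqs ?N. ?A (g * ?y (Suc d)) / real_of_int \<bar>g\<bar>)"
    unfolding dual_sum_kernel_Suc by (simp add: prod.cl_ivl_Suc algebra_simps)
  moreover have "?Q (Suc d)
      = ?Q d * ((1 + \<gamma> (Suc d)) + (1 + 2 * real b ^ min (w (Suc d)) m) * \<gamma> (Suc d) * S_N ?N)"
    by (simp add: prod.cl_ivl_Suc)
  ultimately show ?case
    using cbc_step_inequality[OF Suc.IH cbc_increment_le[OF b \<gamma> cbc]] Suc.prems \<gamma>[of "Suc d"] N0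
    by (simp add: S_N_nonneg)
qed simp

section \<open>Fourier coefficients of a discrete interval\<close>

lemma jordan_inequality:
  fixes x :: real
  assumes "0 \<le> x" "x \<le> pi / 2"
  shows "2 / pi * x \<le> sin x"
proof -
  have conc: "concave_on {0..pi} sin"
    by (rule f''_le0_imp_concave[where f'=cos and f''="\<lambda>x. - sin x"])
       (auto intro!: derivative_eq_intros sin_ge_zero)
  define t where "t = 2 / pi * x"
  have t: "0 \<le> t" "t \<le> 1" using assms pi_gt_zero unfolding t_def by (auto simp: field_simps)
  have "(1 - t) * sin 0 + t * sin (pi / 2) \<le> sin ((1 - t) *\<^sub>R 0 + t *\<^sub>R (pi / 2))"
    by (rule concave_onD[OF conc t]) (use pi_gt_zero in auto)
  moreover have "t *\<^sub>R (pi / 2) = x" unfolding t_def using pi_gt_zero by simp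
  ultimately show ?thesis unfolding t_def by simp
qed

lemma norm_exp_i_minus_1: "norm (exp (\<i> * complex_of_real \<theta>) - 1) = 2 * \<bar>sin (\<theta> / 2)\<bar>"
proof -
  have e: "exp (\<i> * complex_of_real \<theta>) = Complex (cos \<theta>) (sin \<theta>)"
    by (simp add: cis_conv_exp[symmetric] complex_eq_iff)
  have "(norm (exp (\<i> * complex_of_real \<theta>) - 1))\<^sup>2 = (cos \<theta> - 1)\<^sup>2 + (sin \<theta>)\<^sup>2"
    unfolding e by (simp add: cmod_def)
  also have "\<dots> = 2 - 2 * cos \<theta>"
    using sin_cos_squared_add[of \<theta>] by (simp add: power2_diff)
  also have "\<dots> = (2 * \<bar>sin (\<theta> / 2)\<bar>)\<^sup>2"
    using cos_double_sin[of "\<theta> / 2"] by (simp add: power_mult_distrib)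
  finally have "(norm (exp (\<i> * complex_of_real \<theta>) - 1))\<^sup>2 = (2 * \<bar>sin (\<theta> / 2)\<bar>)\<^sup>2" .
  then show ?thesis by (subst (asm) power2_eq_iff_nonneg) simp_all
qed

lemma norm_addchar_minus_1_ge:
  assumes "N > 0" "h \<in> freqs N"
  shows "4 * real_of_int \<bar>h\<bar> / real N \<le> norm (addchar N (- h) - 1)"
proof -
  let ?\<alpha> = "pi * real_of_int \<bar>h\<bar> / real N"
  have h: "0 < real_of_int \<bar>h\<bar>" "real_of_int \<bar>h\<bar> \<le> real N / 2"
    using assms(2) unfolding freqs_def by auto
  then have \<alpha>: "0 \<le> ?\<alpha>" "?\<alpha> \<le> pi / 2" using assms(1) by (auto simp: field_simps)
  have "addchar N (- h) = exp (\<i> * complex_of_real (- 2 * pi * real_of_int h / real N))"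
    unfolding addchar_def by (simp add: field_simps)
  then have "norm (addchar N (- h) - 1) = 2 * \<bar>sin (- 2 * pi * real_of_int h / real N / 2)\<bar>"
    by (simp only: norm_exp_i_minus_1)
  also have "- 2 * pi * real_of_int h / real N / 2 = - (pi * real_of_int h / real N)" by simp
  also have "\<bar>sin (- (pi * real_of_int h / real N))\<bar> = \<bar>sin \<bar>pi * real_of_int h / real N\<bar>\<bar>"
    by (simp add: abs_if)
  also have "\<bar>pi * real_of_int h / real N\<bar> = ?\<alpha>" by (simp add: abs_mult)
  also have "\<bar>sin ?\<alpha>\<bar> = sin ?\<alpha>"
    using \<alpha> pi_gt_zero by (intro abs_of_nonneg sin_ge_zero) linarith+
  finally have "norm (addchar N (- h) - 1) = 2 * sin ?\<alpha>" .
  moreover have "2 * (2 / pi * ?\<alpha>) = 4 * real_of_int \<bar>h\<bar> / real N" by simp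
  ultimately show ?thesis using jordan_inequality[OF \<alpha>] by linarith
qed

text \<open>\<open>box_coeff N a h\<close> is the \<open>h\<close>-th discrete Fourier coefficient of the indicator of
  \<open>{0, \<dots>, a - 1}\<close> modulo \<open>N\<close>.\<close>

definition box_coeff :: "nat \<Rightarrow> nat \<Rightarrow> int \<Rightarrow> complex" where
  "box_coeff N a h = (1 / of_nat N) * (\<Sum>r<a. addchar N (- (h * int r)))"

lemma box_coeff_0 [simp]: "box_coeff N a 0 = of_nat a / of_nat N"
  unfolding box_coeff_def by simp

lemma sum_box_coeff_addchar:
  assumes "N > 0" "a \<le> N"
  shows "(\<Sum>h\<in>freqs0 N. box_coeff N a h * addchar N (h * t)) = (if t mod int N < int a then 1 else 0)"
proof -
  have dvd_iff: "int N dvd t - int r \<longleftrightarrow> r = nat (t mod int N)" if "r < a" for r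
  proof -
    have "int N dvd t - int r \<longleftrightarrow> t mod int N = int r mod int N" by (simp add: mod_eq_dvd_iff)
    also have "\<dots> \<longleftrightarrow> t mod int N = int r" using that assms by simp
    finally show ?thesis using assms(1) by auto
  qed
  have "(\<Sum>h\<in>freqs0 N. box_coeff N a h * addchar N (h * t))
      = (1 / of_nat N) * (\<Sum>r<a. \<Sum>h\<in>freqs0 N. addchar N (h * (t - int r)))"
    unfolding box_coeff_def sum_distrib_left sum_distrib_right
    by (subst sum.swap) (intro sum.cong refl, simp add: addchar_add[symmetric] algebra_simps)
  also have "\<dots> = (\<Sum>r<a. if r = nat (t mod int N) then 1 else 0)"
    unfolding sum_addchar_freqs0[OF assms(1)] sum_distrib_left
    using assms(1) by (intro sum.cong refl) (auto simp: dvd_iff)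
  also have "\<dots> = (if t mod int N < int a then 1 else 0)"
    using assms(1) by (auto simp: nat_less_iff)
  finally show ?thesis .
qed

lemma norm_box_coeff_le:
  assumes "N > 0" "h \<in> freqs N"
  shows "norm (box_coeff N a h) \<le> 1 / (2 * real_of_int \<bar>h\<bar>)"
proof -
  let ?q = "addchar N (- h)"
  have h: "0 < real_of_int \<bar>h\<bar>" using assms(2) unfolding freqs_def by auto
  have den: "4 * real_of_int \<bar>h\<bar> / real N \<le> norm (?q - 1)"
    by (rule norm_addchar_minus_1_ge[OF assms])
  moreover have "0 < 4 * real_of_int \<bar>h\<bar> / real N" using h assms(1) by simp
  ultimately have "?q \<noteq> 1" by fastforce
  have "(\<Sum>r<a. addchar N (- (h * int r))) = (\<Sum>r<a. ?q ^ r)"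
    by (intro sum.cong refl) (metis addchar_int_mult mult.commute mult_minus_right)
  also have "\<dots> = (?q ^ a - 1) / (?q - 1)" using \<open>?q \<noteq> 1\<close> by (rule geometric_sum)
  finally have "norm (box_coeff N a h) = (1 / real N) * (norm (?q ^ a - 1) / norm (?q - 1))"
    unfolding box_coeff_def by (simp add: norm_divide norm_mult)
  also have "\<dots> \<le> (1 / real N) * (2 / (4 * real_of_int \<bar>h\<bar> / real N))"
    using norm_triangle_ineq4[of "?q ^ a" 1] den h assms(1)
    by (intro mult_left_mono frac_le) (auto simp: norm_power)
  also have "\<dots> = 1 / (2 * real_of_int \<bar>h\<bar>)" using assms(1) h by (simp add: field_simps)
  finally show ?thesis .
qed

section \<open>Local discrepancy\<close>

lemma frac_of_int_div:
  assumes "N > 0"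
  shows "frac (real_of_int k / real N) = real_of_int (k mod int N) / real N"
proof -
  have "real_of_int k = real N * real_of_int (k div int N) + real_of_int (k mod int N)"
    by (metis of_int_add of_int_mult of_int_of_nat_eq div_mult_mod_eq mult.commute)
  then have "real_of_int k / real N = real_of_int (k div int N) + real_of_int (k mod int N) / real N"
    using assms by (simp add: field_simps)
  moreover have "\<lfloor>real_of_int k / real N\<rfloor> = k div int N"
    using floor_divide_of_int_eq[of k "int N"] by simp
  ultimately show ?thesis unfolding frac_def by simp
qed

lemma frac_less_iff_mod_less:
  assumes "N > 0" "0 < x"
  shows "frac (real k * real_of_int Y / real N) < x \<longleftrightarrow> (int k * Y) mod int N < int (nat \<lceil>real N * x\<rceil>)"
proof -
  have "frac (real k * real_of_int Y / real N) < x \<longleftrightarrow> real_of_int ((int k * Y) mod int N) < real N * x"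
    using frac_of_int_div[OF assms(1), of "int k * Y"] assms by (simp add: divide_less_eq mult.commute)
  also have "\<dots> \<longleftrightarrow> (int k * Y) mod int N < \<lceil>real N * x\<rceil>" by (simp add: less_ceiling_iff)
  moreover have "0 < real N * x" using assms by simp
  then have "0 \<le> \<lceil>real N * x\<rceil>" by simp
  ultimately show ?thesis by simp
qed

lemma grid_round_up_bounds:
  assumes "N > 0" "0 < x" "x \<le> 1"
  shows "x \<le> real (nat \<lceil>real N * x\<rceil>) / real N" "real (nat \<lceil>real N * x\<rceil>) / real N \<le> 1"
    "real (nat \<lceil>real N * x\<rceil>) / real N - x \<le> 1 / real N"
proof -
  have a: "real (nat \<lceil>real N * x\<rceil>) = real_of_int \<lceil>real N * x\<rceil>" using assms by simp
  have "real N * x \<le> real (nat \<lceil>real N * x\<rceil>)" unfolding a by (rule le_of_int_ceiling)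
  then show "x \<le> real (nat \<lceil>real N * x\<rceil>) / real N" using assms(1) by (simp add: le_divide_eq mult.commute)
  have "\<lceil>real N * x\<rceil> \<le> int N" using assms(3) by (simp add: ceiling_le_iff mult_left_le)
  then show "real (nat \<lceil>real N * x\<rceil>) / real N \<le> 1" using a assms(1) by (simp add: divide_le_eq)
  have "real (nat \<lceil>real N * x\<rceil>) \<le> real N * x + 1" unfolding a by (rule of_int_ceiling_le_add_one)
  then have "(real (nat \<lceil>real N * x\<rceil>) - real N * x) / real N \<le> 1 / real N"
    by (intro divide_right_mono) auto
  then show "real (nat \<lceil>real N * x\<rceil>) / real N - x \<le> 1 / real N"
    using assms(1) by (simp add: diff_divide_distrib)
qed

lemma prod_diff_le_one_minus_power:
  fixes p x :: "nat \<Rightarrow> real"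
  assumes "finite u" "\<And>j. j \<in> u \<Longrightarrow> 0 \<le> x j \<and> x j \<le> p j \<and> p j \<le> 1 \<and> p j - x j \<le> \<delta>" "\<delta> \<le> 1"
  shows "(\<Prod>j\<in>u. p j) - (\<Prod>j\<in>u. x j) \<le> 1 - (1 - \<delta>) ^ card u"
  using assms(1,2)
proof (induction u rule: finite_induct)
  case (insert i F)
  let ?P = "\<Prod>j\<in>F. p j" and ?X = "\<Prod>j\<in>F. x j" and ?c = "(1 - \<delta>) ^ card F"
  have IH: "?P - ?X \<le> 1 - ?c" using insert by auto
  have X0: "0 \<le> ?X" using insert.prems by (intro prod_nonneg) auto
  have P0: "0 \<le> ?P" and P1: "?P \<le> 1"
    using insert.prems by (auto intro!: prod_nonneg prod_le_1 intro: order_trans)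
  have XP: "?X \<le> ?P" using insert.prems by (intro prod_mono) auto
  have xi: "0 \<le> x i" "x i \<le> p i" "p i \<le> 1" "p i - x i \<le> \<delta>" using insert.prems[of i] by auto
  have "p i * ?P - x i * ?X \<le> 1 - (1 - \<delta>) * ?c"
  proof (cases "x i \<le> 1 - \<delta>")
    case True
    \<comment> \<open>write the difference as \<open>(p i - x i) P + x i (P - X)\<close>\<close>
    have "(p i - x i) * ?P \<le> \<delta> * 1" using xi P0 P1 by (intro mult_mono) auto
    moreover have "x i * (?P - ?X) \<le> (1 - \<delta>) * (1 - ?c)" using xi IH XP True by (intro mult_mono) auto
    ultimately show ?thesis by (simp add: algebra_simps)
  next
    case False
    \<comment> \<open>now the difference is at most \<open>P - (1 - \<delta>) X\<close>; compare \<open>X\<close> with \<open>c\<close>\<close>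
    have "p i * ?P \<le> 1 * ?P" using xi P0 by (intro mult_right_mono) auto
    moreover have "(1 - \<delta>) * ?X \<le> x i * ?X" using False X0 by (intro mult_right_mono) auto
    moreover have "?P - (1 - \<delta>) * ?X \<le> 1 - (1 - \<delta>) * ?c"
    proof (cases "?X \<le> ?c")
      case True
      then have "\<delta> * ?X \<le> \<delta> * ?c" using False xi by (intro mult_left_mono) auto
      then show ?thesis using IH by (simp add: algebra_simps)
    next
      case False
      then have "(1 - \<delta>) * ?c \<le> (1 - \<delta>) * ?X" using assms(3) by (intro mult_left_mono) auto
      then show ?thesis using P1 by simp
    qed
    ultimately show ?thesis by simp
  qed
  then show ?case using insert by simp
qed simp

definition box_weight :: "nat \<Rightarrow> (nat \<Rightarrow> real) \<Rightarrow> nat set \<Rightarrow> (nat \<Rightarrow> nat) \<Rightarrow> nat \<Rightarrow> int \<Rightarrow> complex" where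
  "box_weight N \<gamma> u a j h =
     (if j \<in> u then complex_of_real (\<gamma> j) * box_coeff N (a j) h else if h = 0 then 1 else 0)"

lemma dual_sum_box_weight:
  assumes "N > 0" "u \<subseteq> {1..s}" "\<And>j. j \<in> u \<Longrightarrow> a j \<le> N"
  shows "dual_sum N (box_weight N \<gamma> u a) y s 0
       = of_real ((\<Prod>j\<in>u. \<gamma> j) * real (card {k \<in> {0..<N}. \<forall>j\<in>u. (int k * y j) mod int N < int (a j)}) / real N)"
proof -
  let ?c = "\<lambda>k j. (int k * y j) mod int N < int (a j)"
  have fu: "finite u" using assms(2) finite_subset by blast
  have factor: "(\<Sum>h\<in>freqs0 N. box_weight N \<gamma> u a j h * addchar N (int k * h * y j))
      = (if j \<in> u then complex_of_real (\<gamma> j) * (if ?c k j then 1 else 0) else 1)" for j k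
  proof (cases "j \<in> u")
    case True
    then have "(\<Sum>h\<in>freqs0 N. box_weight N \<gamma> u a j h * addchar N (int k * h * y j))
        = complex_of_real (\<gamma> j) * (\<Sum>h\<in>freqs0 N. box_coeff N (a j) h * addchar N (h * (int k * y j)))"
      unfolding sum_distrib_left box_weight_def by (intro sum.cong refl) (simp add: mult_ac)
    then show ?thesis using True by (simp only: sum_box_coeff_addchar[OF assms(1,3)]) simp
  next
    case False
    have "(\<Sum>h\<in>freqs N. (if h = 0 then 1 else 0) * addchar N (int k * h * y j)) = 0"
      by (rule sum.neutral) auto
    then show ?thesis using False by (simp add: box_weight_def freqs0_def)
  qed
  have "(\<Prod>j\<in>{1..s}. \<Sum>h\<in>freqs0 N. box_weight N \<gamma> u a j h * addchar N (int k * h * y j))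
      = (\<Prod>j\<in>u. complex_of_real (\<gamma> j) * (if ?c k j then 1 else 0))" for k
    unfolding factor using assms(2) by (simp add: prod.inter_restrict[symmetric] Int_absorb1)
  also have "\<dots> k = complex_of_real (\<Prod>j\<in>u. \<gamma> j) * (if \<forall>j\<in>u. ?c k j then 1 else 0)" for k
    using fu by (auto simp: prod.distrib prod_zero_iff)
  finally have "dual_sum N (box_weight N \<gamma> u a) y s 0
      = (1 / of_nat N) * (complex_of_real (\<Prod>j\<in>u. \<gamma> j) * (\<Sum>k<N. if \<forall>j\<in>u. ?c k j then 1 else 0))"
    by (simp only: dual_sum_Fourier[OF assms(1), symmetric] mult_zero_right addchar_0 mult_1_right
        sum_distrib_left)
  also have "(\<Sum>k<N. if \<forall>j\<in>u. ?c k j then 1 else 0 :: complex)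
      = of_nat (card {k \<in> {0..<N}. \<forall>j\<in>u. ?c k j})"
    by (simp add: sum.inter_filter[symmetric] atLeast0LessThan)
  finally show ?thesis by simp
qed

lemma box_weight_le_kernel_coeff:
  assumes "N > 0" "0 \<le> \<gamma> j" "\<And>j. j \<in> u \<Longrightarrow> a j \<le> N"
  shows "norm (box_weight N \<gamma> u a j 0) \<le> kernel_coeff (\<lambda>j. 1 + \<gamma> j) \<gamma> j 0"
    and "h \<in> freqs N \<Longrightarrow> 2 * norm (box_weight N \<gamma> u a j h) \<le> kernel_coeff (\<lambda>j. 1 + \<gamma> j) \<gamma> j h"
proof -
  show "norm (box_weight N \<gamma> u a j 0) \<le> kernel_coeff (\<lambda>j. 1 + \<gamma> j) \<gamma> j 0"
  proof (cases "j \<in> u")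
    case True
    then have "real (a j) / real N \<le> 1" using assms by (simp add: divide_le_eq)
    then have "\<gamma> j * (real (a j) / real N) \<le> \<gamma> j" using assms(2) mult_left_le by blast
    moreover have "norm (box_weight N \<gamma> u a j 0) = \<gamma> j * (real (a j) / real N)"
      using True assms(2) by (simp add: box_weight_def norm_mult norm_divide)
    ultimately show ?thesis by (simp add: kernel_coeff_def)
  qed (use assms(2) in \<open>simp add: box_weight_def kernel_coeff_def\<close>)
  assume h: "h \<in> freqs N"
  then have "h \<noteq> 0" by auto
  show "2 * norm (box_weight N \<gamma> u a j h) \<le> kernel_coeff (\<lambda>j. 1 + \<gamma> j) \<gamma> j h"
  proof (cases "j \<in> u")
    case True
    have "2 * (\<gamma> j * norm (box_coeff N (a j) h)) \<le> 2 * (\<gamma> j * (1 / (2 * real_of_int \<bar>h\<bar>)))"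
      using norm_box_coeff_le[OF assms(1) h] assms(2) by (intro mult_left_mono) auto
    then show ?thesis using True assms(2) \<open>h \<noteq> 0\<close>
      by (simp add: box_weight_def kernel_coeff_def norm_mult)
  qed (use assms(2) \<open>h \<noteq> 0\<close> in \<open>simp add: box_weight_def kernel_coeff_def\<close>)
qed

lemma weighted_grid_box_error_le:
  fixes \<gamma> :: "nat \<Rightarrow> real"
  assumes "N > 0" "\<And>j. j \<in> {1..s} \<Longrightarrow> 0 \<le> \<gamma> j" "u \<subseteq> {1..s}" "\<And>j. j \<in> u \<Longrightarrow> a j \<le> N"
  shows "(\<Prod>j\<in>u. \<gamma> j) * \<bar>real (card {k \<in> {0..<N}. \<forall>j\<in>u. (int k * y j) mod int N < int (a j)}) / real N
            - (\<Prod>j\<in>u. real (a j) / real N)\<bar>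
         \<le> (dual_sum N (kernel_coeff (\<lambda>j. 1 + \<gamma> j) \<gamma>) y s 0 - (\<Prod>j\<in>{1..s}. 1 + \<gamma> j)) / 2"
proof -
  let ?cnt = "real (card {k \<in> {0..<N}. \<forall>j\<in>u. (int k * y j) mod int N < int (a j)})"
  let ?\<phi> = "box_weight N \<gamma> u a" and ?\<rho> = "kernel_coeff (\<lambda>j. 1 + \<gamma> j) \<gamma>"
  let ?gu = "\<Prod>j\<in>u. \<gamma> j" and ?pa = "\<Prod>j\<in>u. real (a j) / real N"
  have "(\<Prod>j\<in>{1..s}. ?\<phi> j 0) = (\<Prod>j\<in>{1..s}. if j \<in> u then of_real (\<gamma> j * (real (a j) / real N)) else 1)"
    by (intro prod.cong refl) (simp add: box_weight_def)
  also have "\<dots> = (\<Prod>j\<in>u. of_real (\<gamma> j * (real (a j) / real N)))"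
    by (simp only: prod.inter_restrict[OF finite_atLeastAtMost, symmetric] Int_absorb1[OF assms(3)])
  also have "\<dots> = of_real (?gu * ?pa)"
    by (simp only: of_real_prod[symmetric] prod.distrib)
  finally have "dual_sum N ?\<phi> y s 0 - (\<Prod>j\<in>{1..s}. ?\<phi> j 0) = of_real (?gu * ?cnt / real N - ?gu * ?pa)"
    by (simp add: dual_sum_box_weight[OF assms(1,3,4)])
  moreover have "norm (dual_sum N ?\<phi> y s 0 - (\<Prod>j\<in>{1..s}. ?\<phi> j 0))
      \<le> (dual_sum N ?\<rho> y s 0 - (\<Prod>j\<in>{1..s}. ?\<rho> j 0)) / 2"
    using norm_dual_sum_minus_zero_freq_le[of s ?\<phi> ?\<rho> N y 0]
      box_weight_le_kernel_coeff[OF assms(1) assms(2) assms(4)] by auto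
  moreover have "(\<Prod>j\<in>{1..s}. ?\<rho> j 0) = (\<Prod>j\<in>{1..s}. 1 + \<gamma> j)"
    by (simp add: kernel_coeff_def)
  ultimately have "\<bar>?gu * ?cnt / real N - ?gu * ?pa\<bar>
      \<le> (dual_sum N ?\<rho> y s 0 - (\<Prod>j\<in>{1..s}. 1 + \<gamma> j)) / 2"
    by (simp only: norm_of_real)
  moreover have "?gu * ?cnt / real N - ?gu * ?pa = ?gu * (?cnt / real N - ?pa)"
    by (simp add: algebra_simps)
  moreover have "?gu \<ge> 0" by (intro prod_nonneg) (use assms(2,3) in auto)
  ultimately show ?thesis by (simp add: abs_mult)
qed

lemma local_discrepancy_le:
  fixes \<gamma> :: "nat \<Rightarrow> real"
  assumes "N > 0" "\<And>j. j \<in> {1..s} \<Longrightarrow> 0 \<le> \<gamma> j" "u \<subseteq> {1..s}" "\<And>j. j \<in> {1..s} \<Longrightarrow> 0 < x j \<and> x j \<le> 1"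
  shows "(\<Prod>j\<in>u. \<gamma> j) * \<bar>discr_u N y u x\<bar>
     \<le> (\<Sum>v\<in>Pow {1..s}. (\<Prod>j\<in>v. \<gamma> j) * (1 - (1 - 1 / real N) ^ card v))
        + (dual_sum N (kernel_coeff (\<lambda>j. 1 + \<gamma> j) \<gamma>) y s 0 - (\<Prod>j\<in>{1..s}. 1 + \<gamma> j)) / 2"
proof -
  define a where "a j = nat \<lceil>real N * x j\<rceil>" for j
  let ?cnt = "real (card {k \<in> {0..<N}. \<forall>j\<in>u. (int k * y j) mod int N < int (a j)})"
  let ?pa = "\<Prod>j\<in>u. real (a j) / real N" and ?px = "\<Prod>j\<in>u. x j" and ?gu = "\<Prod>j\<in>u. \<gamma> j"
  have x: "0 < x j" "x j \<le> 1" if "j \<in> u" for j using assms(3,4) that by auto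
  have gu: "?gu \<ge> 0" by (intro prod_nonneg) (use assms(2,3) in auto)
  have rounding: "x j \<le> real (a j) / real N \<and> real (a j) / real N \<le> 1 \<and> real (a j) / real N - x j \<le> 1 / real N"
    if "j \<in> u" for j
    using grid_round_up_bounds[OF assms(1) x[OF that]] unfolding a_def by simp
  have a_le: "a j \<le> N" if "j \<in> u" for j
    using rounding[OF that] assms(1) by (simp add: divide_le_eq)
  have discr: "discr_u N y u x = ?cnt / real N - ?px"
    unfolding discr_u_def a_def using frac_less_iff_mod_less[OF assms(1)] x
    by (intro arg_cong2[where f="(-)"] arg_cong[where f="\<lambda>n. real (card n) / real N"] Collect_cong) auto
  have "?px \<le> ?pa" using rounding x by (intro prod_mono) (auto intro: less_imp_le)
  then have tri: "\<bar>?cnt / real N - ?px\<bar> \<le> \<bar>?cnt / real N - ?pa\<bar> + (?pa - ?px)" by arith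
  have "?gu * \<bar>discr_u N y u x\<bar> \<le> ?gu * (\<bar>?cnt / real N - ?pa\<bar> + (?pa - ?px))"
    unfolding discr using tri gu by (rule mult_left_mono)
  also have "\<dots> = ?gu * \<bar>?cnt / real N - ?pa\<bar> + ?gu * (?pa - ?px)" by (rule distrib_left)
  also have "?gu * (?pa - ?px) \<le> ?gu * (1 - (1 - 1 / real N) ^ card u)"
    using rounding x assms(1) gu
    by (intro mult_left_mono prod_diff_le_one_minus_power)
       (auto simp: finite_subset[OF assms(3)] intro: less_imp_le)
  also have "\<dots> \<le> (\<Sum>v\<in>Pow {1..s}. (\<Prod>j\<in>v. \<gamma> j) * (1 - (1 - 1 / real N) ^ card v))"
  proof (rule member_le_sum[where f="\<lambda>v. (\<Prod>j\<in>v. \<gamma> j) * (1 - (1 - 1 / real N) ^ card v)"])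
    fix v assume "v \<in> Pow {1..s} - {u}"
    then have "(\<Prod>j\<in>v. \<gamma> j) \<ge> 0" by (intro prod_nonneg) (use assms(2) in auto)
    moreover have "(1 - 1 / real N) ^ card v \<le> 1" using assms(1) by (intro power_le_one) auto
    ultimately show "0 \<le> (\<Prod>j\<in>v. \<gamma> j) * (1 - (1 - 1 / real N) ^ card v)" by simp
  qed (use assms(3) in auto)
  finally show ?thesis
    using weighted_grid_box_error_le[of N s \<gamma> u a y, OF assms(1,2,3) a_le] by linarith
qed

lemma weighted_star_discrepancy_le:
  assumes "s \<ge> 1"
    and "\<And>x u. (\<forall>j\<in>{1..s}. 0 < x j \<and> x j \<le> 1) \<Longrightarrow> u \<subseteq> {1..s} \<Longrightarrow> u \<noteq> {}
           \<Longrightarrow> (\<Prod>j\<in>u. \<gamma> j) * \<bar>discr_u N y u x\<bar> \<le> B"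
  shows "weighted_star_discrepancy s N \<gamma> y \<le> B"
  unfolding weighted_star_discrepancy_def
proof (rule cSUP_least)
  have "((\<lambda>_. 1), {1}) \<in> {(x, u). (\<forall>j\<in>{1..s}. 0 < x j \<and> x j \<le> (1::real)) \<and> u \<subseteq> {1..s} \<and> u \<noteq> {}}"
    using assms(1) by simp
  then show "{(x, u). (\<forall>j\<in>{1..s}. 0 < x j \<and> x j \<le> (1::real)) \<and> u \<subseteq> {1..s} \<and> u \<noteq> {}} \<noteq> {}"
    by (metis empty_iff)
next
  fix p assume "p \<in> {(x, u). (\<forall>j\<in>{1..s}. 0 < x j \<and> x j \<le> (1::real)) \<and> u \<subseteq> {1..s} \<and> u \<noteq> {}}"
  then show "(\<Prod>j\<in>snd p. \<gamma> j) * \<bar>discr_u N y (snd p) (fst p)\<bar> \<le> B"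
    using assms(2) by (cases p) auto
qed

theorem corollary1:
  fixes b m s :: nat and \<gamma> :: "nat \<Rightarrow> real" and w z :: "nat \<Rightarrow> nat"
  assumes "prime b" and "m \<ge> 1" and "s \<ge> 1"
    and "\<forall>j\<ge>1. 0 < \<gamma> j \<and> \<gamma> j \<le> 1"
    and "\<forall>i j. 1 \<le> i \<longrightarrow> i \<le> j \<longrightarrow> \<gamma> j \<le> \<gamma> i"
    and "\<forall>i j. 1 \<le> i \<longrightarrow> i \<le> j \<longrightarrow> w i \<le> w j"
    and "z 1 = 1"
    and "\<forall>d\<in>{1..<s}. z (d + 1) \<in> Zset b m (w (d + 1)) \<and>
           (\<forall>z'\<in>Zset b m (w (d + 1)).
              Re (R_crit (d + 1) (b ^ m) (\<lambda>j. 1 + \<gamma> j) \<gamma>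
                    (\<lambda>j. int (b ^ w j * z j)))
              \<le> Re (R_crit (d + 1) (b ^ m) (\<lambda>j. 1 + \<gamma> j) \<gamma>
                    (\<lambda>j. if j = d + 1 then int (b ^ w j * z') else int (b ^ w j * z j))))"
  shows "weighted_star_discrepancy s (b ^ m) \<gamma> (\<lambda>j. int (b ^ w j * z j))
    \<le> (\<Sum>u\<in>Pow {1..s}. (\<Prod>j\<in>u. \<gamma> j) * (1 - (1 - 1 / real (b ^ m)) ^ card u))
       + 1 / (2 * real (b ^ m)) *
         (\<Prod>j\<in>{1..s}. (1 + \<gamma> j) + (1 + 2 * real b ^ min (w j) m) * \<gamma> j * S_N (b ^ m))"
proof -
  let ?N = "b ^ m" and ?y = "\<lambda>j. int (b ^ w j * z j)"
  have N0: "?N > 0" using assms(1) prime_gt_0_nat by simp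
  have \<gamma>: "\<And>j. 1 \<le> j \<Longrightarrow> 0 < \<gamma> j" using assms(4) by simp
  have "reduced_cbc b m s \<gamma> w z" unfolding reduced_cbc_def using assms(7,8) by simp
  from cbc_dual_sum_bound[OF assms(1) \<gamma> this order.refl]
  have R: "(dual_sum ?N (kernel_coeff (\<lambda>j. 1 + \<gamma> j) \<gamma>) ?y s 0 - (\<Prod>j\<in>{1..s}. 1 + \<gamma> j)) / 2
    \<le> 1 / (2 * real ?N) * (\<Prod>j\<in>{1..s}. (1 + \<gamma> j) + (1 + 2 * real b ^ min (w j) m) * \<gamma> j * S_N ?N)"
    by simp
  show ?thesis
  proof (rule weighted_star_discrepancy_le[OF assms(3)])
    fix x :: "nat \<Rightarrow> real" and u assume "\<forall>j\<in>{1..s}. 0 < x j \<and> x j \<le> 1" "u \<subseteq> {1..s}"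
    then have "(\<Prod>j\<in>u. \<gamma> j) * \<bar>discr_u ?N ?y u x\<bar>
      \<le> (\<Sum>v\<in>Pow {1..s}. (\<Prod>j\<in>v. \<gamma> j) * (1 - (1 - 1 / real ?N) ^ card v))
        + (dual_sum ?N (kernel_coeff (\<lambda>j. 1 + \<gamma> j) \<gamma>) ?y s 0 - (\<Prod>j\<in>{1..s}. 1 + \<gamma> j)) / 2"
      using \<gamma> by (intro local_discrepancy_le[OF N0]) (auto intro: less_imp_le)
    then show "(\<Prod>j\<in>u. \<gamma> j) * \<bar>discr_u ?N ?y u x\<bar>
      \<le> (\<Sum>v\<in>Pow {1..s}. (\<Prod>j\<in>v. \<gamma> j) * (1 - (1 - 1 / real ?N) ^ card v))
        + 1 / (2 * real ?N) * (\<Prod>j\<in>{1..s}. (1 + \<gamma> j) + (1 + 2 * real b ^ min (w j) m) * \<gamma> j * S_N ?N)"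
      using R by linarith
  qed
qed

end
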